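(* Let $\alpha,\beta,\omega>0$ and $\rho\in\mathbb R$ be fixed. Let $h_1,h_2,H$ be real analytic functions on a neighborhood of $(0,0)\in\mathbb R^2$ with $h_1(0,0)=h_2(0,0)=0$, and consider, for a small parameter $\mu\ge0$, the system $$\frac{d\xi}{dt}=-\alpha\xi-\mu(1+h_1(\xi,\eta))(\rho H(\xi,\eta)+\sin\theta),\quad \frac{d\eta}{dt}=\beta\eta+\mu(1+h_2(\xi,\eta))(\rho H(\xi,\eta)+\sin\theta),\quad \frac{d\theta}{dt}=\omega.$$ Then (for $\mu\in[0,\mu_0]$ with $\mu_0>0$ sufficiently small) this system has a unique solution of the form $\xi=\mu\phi(\theta;\mu)$, $\eta=\mu\psi(\theta;\mu)$, $\theta=\omega t$, with $\phi(\theta+2\pi;\mu)=\phi(\theta;\mu)$ and $\psi(\theta+2\pi;\mu)=\psi(\theta;\mu)$. Moreover, the $C^3$ norms of $\phi$ and $\psi$, regarded as functions of $(\theta,\mu)$, are bounded by a constant $K$. *)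

theory Defs
  imports "HOL-Analysis.Analysis"
begin

definition real_analytic2_on :: "(real \<Rightarrow> real \<Rightarrow> real) \<Rightarrow> (real \<times> real) set \<Rightarrow> bool" where
  "real_analytic2_on f U \<longleftrightarrow> open U \<and>
     (\<forall>(a,b)\<in>U. \<exists>r>0. \<exists>c::nat \<Rightarrow> nat \<Rightarrow> real.
        \<forall>x y. (x - a)^2 + (y - b)^2 < r^2 \<longrightarrow>
          ((\<lambda>(i,j). c i j * (x - a)^i * (y - b)^j) has_sum f x y) UNIV)"

text \<open>f, as a function of (theta, mu) on R x M, is C^3 with C^3 norm at most K:
  P i j is the partial derivative d^i/dtheta^i d^j/dmu^j f (one-sided in mu at the
  boundary of M), all partials of order at most 3 exist, are jointly continuous and
  bounded by K.\<close>
definition C3_bounded :: "real set \<Rightarrow> real \<Rightarrow> (real \<Rightarrow> real \<Rightarrow> real) \<Rightarrow> bool" where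
  "C3_bounded M K f \<longleftrightarrow> (\<exists>P::nat \<Rightarrow> nat \<Rightarrow> real \<Rightarrow> real \<Rightarrow> real. P 0 0 = f \<and>
     (\<forall>i j. i + j < 3 \<longrightarrow> (\<forall>\<theta>. \<forall>m\<in>M.
         ((\<lambda>s. P i j s m) has_real_derivative P (Suc i) j \<theta> m) (at \<theta>) \<and>
         ((\<lambda>s. P i j \<theta> s) has_real_derivative P i (Suc j) \<theta> m) (at m within M))) \<and>
     (\<forall>i j. i + j \<le> 3 \<longrightarrow> continuous_on (UNIV \<times> M) (\<lambda>(\<theta>, m). P i j \<theta> m) \<and>
         (\<forall>\<theta>. \<forall>m\<in>M. \<bar>P i j \<theta> m\<bar> \<le> K)))"

definition is_solution ::
  "real \<Rightarrow> real \<Rightarrow> real \<Rightarrow> real \<Rightarrow> (real \<Rightarrow> real \<Rightarrow> real) \<Rightarrow> (real \<Rightarrow> real \<Rightarrow> real)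
   \<Rightarrow> (real \<Rightarrow> real \<Rightarrow> real) \<Rightarrow> real \<Rightarrow> (real \<Rightarrow> real) \<Rightarrow> (real \<Rightarrow> real) \<Rightarrow> bool" where
  "is_solution \<alpha> \<beta> \<omega> \<rho> h1 h2 H \<mu> x y \<longleftrightarrow> (\<forall>t.
     (x has_real_derivative
        (- \<alpha> * x t - \<mu> * (1 + h1 (x t) (y t)) * (\<rho> * H (x t) (y t) + sin (\<omega> * t)))) (at t) \<and>
     (y has_real_derivative
        (\<beta> * y t + \<mu> * (1 + h2 (x t) (y t)) * (\<rho> * H (x t) (y t) + sin (\<omega> * t)))) (at t))"

end

theory Submission
  imports Defs "HOL-Complex_Analysis.Complex_Analysis"
begin

text \<open>In the time \<open>\<theta> = \<omega> t\<close>, with \<open>\<xi> = \<mu> \<phi>\<close> and \<open>\<eta> = \<mu> \<psi>\<close>, the system becomes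
  \<open>\<phi>' = - k\<^sub>a \<phi> + g\<^sub>1\<close>, \<open>\<psi>' = k\<^sub>b \<psi> + g\<^sub>2\<close>, where \<open>k\<^sub>a = \<alpha>/\<omega>\<close>, \<open>k\<^sub>b = \<beta>/\<omega>\<close> and the
  nonlinearities \<open>g\<^sub>1, g\<^sub>2\<close> depend on \<open>\<phi>, \<psi>\<close> only through \<open>\<mu> \<phi>, \<mu> \<psi>\<close>. The \<open>2\<pi>\<close>-periodic
  solutions are exactly the fixed points of the variation of constants operator
  \<open>\<phi>(\<theta>) = c(k\<^sub>a) \<integral> exp(- k\<^sub>a t) g\<^sub>1(\<theta> - t) dt\<close>, \<open>\<psi>(\<theta>) = - c(k\<^sub>b) \<integral> exp(- k\<^sub>b t) g\<^sub>2(\<theta> + t) dt\<close>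
  (integrals over \<open>[0, 2\<pi>]\<close>, \<open>c(k) = 1 / (1 - exp(- 2\<pi> k))\<close>), which is a contraction once \<open>\<mu>\<close>
  is small.

  We solve this fixed point problem with \<open>\<theta>\<close> complexified to the strip \<open>|Im \<theta>| < 1\<close> and \<open>\<mu>\<close>
  complexified to a small disc, in the space of bounded functions that are holomorphic in each
  variable: uniform limits of such functions stay holomorphic, so the fixed point is
  holomorphic in \<open>(\<theta>, \<mu>)\<close>, and Cauchy estimates on a smaller region bound all its partial
  derivatives. Restricted to real arguments it solves the real system. Uniqueness among small
  periodic solutions follows because the same integral operator contracts their distance.\<close>

definition strip :: "real \<Rightarrow> complex set" where "strip a = {z. \<bar>Im z\<bar> < a}"

lemma open_strip: "open (strip a)"
  unfolding strip_def by (intro open_Collect_less continuous_intros)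

lemma convex_strip: "convex (strip a)"
proof -
  have "strip a = {z. Im z < a} \<inter> {z. Im z > - a}" unfolding strip_def by auto
  then show ?thesis by (simp add: convex_Int convex_halfspace_Im_lt convex_halfspace_Im_gt)
qed

lemma strip_mono: "a \<le> b \<Longrightarrow> strip a \<subseteq> strip b"
  unfolding strip_def by auto

lemma ball_subset_strip: "z \<in> strip a' \<Longrightarrow> a' \<le> a \<Longrightarrow> ball z (a - a') \<subseteq> strip a"
  unfolding strip_def
proof clarify
  fix y assume "\<bar>Im z\<bar> < a'" "a' \<le> a" "y \<in> ball z (a - a')"
  then have "\<bar>Im y - Im z\<bar> < a - a'"
    using abs_Im_le_cmod[of "y - z"] by (simp add: dist_norm norm_minus_commute)
  then show "\<bar>Im y\<bar> < a" using \<open>\<bar>Im z\<bar> < a'\<close> by linarith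
qed

lemma strip_add_of_real [simp]: "z + of_real x \<in> strip a \<longleftrightarrow> z \<in> strip a"
  by (simp add: strip_def)

lemma strip_add_of_real_mult [simp]: "z + of_real x * of_real y \<in> strip a \<longleftrightarrow> z \<in> strip a"
  by (simp add: strip_def)

lemma of_real_in_strip: "0 < a \<Longrightarrow> of_real t \<in> strip a"
  by (simp add: strip_def)

section \<open>Cauchy estimates\<close>

lemma Cauchy_higher_deriv_bound:
  assumes "f holomorphic_on A" "cball z r \<subseteq> A" "0 < r" "\<forall>x\<in>A. norm (f x) \<le> M"
  shows "norm ((deriv ^^ n) f z) \<le> fact n * M / r ^ n"
proof (rule Cauchy_inequality)
  show "f holomorphic_on ball z r" "continuous_on (cball z r) f"
    using assms(1,2) ball_subset_cball holomorphic_on_imp_continuous_on holomorphic_on_subset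
    by blast+
  show "norm (f x) \<le> M" if "norm (z - x) = r" for x
    using that assms(2,4) by (auto simp: dist_norm)
qed (use assms in auto)

lemma Cauchy_deriv_bound:
  assumes "f holomorphic_on A" "ball z e \<subseteq> A" "0 < e" "\<forall>x\<in>A. norm (f x) \<le> M"
  shows "norm (deriv f z) \<le> 2 * M / e"
proof -
  have "cball z (e/2) \<subseteq> ball z e" using assms(3) by (simp add: cball_subset_ball_iff)
  then have "cball z (e/2) \<subseteq> A" using assms(2) by blast
  from Cauchy_higher_deriv_bound[OF assms(1) this _ assms(4), of 1] show ?thesis
    using assms(3) by (simp add: mult.commute)
qed

lemma Taylor1_remainder_bound:
  assumes hol: "f holomorphic_on A" and A: "open A" and sub: "ball z e \<subseteq> A" and e: "e > 0"
    and M: "\<forall>x\<in>A. norm (f x) \<le> M" and h: "norm h < e/2"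
  shows "norm (f (z+h) - f z - h * deriv f z) \<le> 32 * M / e^2 * norm h ^ 2"
proof -
  let ?S = "ball z (e/2)"
  have "?S \<subseteq> ball z e" using e by (simp add: ball_subset_ball_iff)
  then have S: "?S \<subseteq> A" using sub by blast
  have "norm ((\<lambda>i. (deriv ^^ i) f) 0 (z+h) - (\<Sum>i\<le>1. (\<lambda>i. (deriv ^^ i) f) i z * ((z+h)-z) ^ i / (fact i)))
        \<le> (32 * M / e^2) * norm ((z+h) - z)^(Suc 1) / fact 1"
  proof (rule complex_Taylor[where S="?S"])
    show "((deriv ^^ i) f has_field_derivative (deriv ^^ Suc i) f x) (at x within ?S)"
      if "x \<in> ?S" for i x
    proof -
      have "(deriv ^^ i) f holomorphic_on A" using hol A by (rule holomorphic_higher_deriv)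
      then have "((deriv ^^ i) f has_field_derivative deriv ((deriv ^^ i) f) x) (at x)"
        using A S that by (meson holomorphic_derivI subsetD)
      then show ?thesis by (simp add: has_field_derivative_at_within)
    qed
    show "norm ((deriv ^^ Suc 1) f x) \<le> 32 * M / e^2" if "x \<in> ?S" for x
    proof -
      have "cball x (e/4) \<subseteq> ball z e" using that e by (simp add: cball_subset_ball_iff dist_commute)
      then have "cball x (e/4) \<subseteq> A" using sub by blast
      then have "norm ((deriv ^^ 2) f x) \<le> fact 2 * M / (e/4)^2"
        using Cauchy_higher_deriv_bound[OF hol _ _ M, of x "e/4" 2] e by simp
      then show ?thesis by (simp add: numeral_2_eq_2 power2_eq_square field_simps)
    qed
  qed (use e h in \<open>auto simp: dist_norm\<close>)
  then show ?thesis by (simp add: algebra_simps power2_eq_square)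
qed

lemma holomorphic_lipschitz_half_cball:
  assumes hol: "f holomorphic_on A" and sub: "ball z e \<subseteq> A" and e: "e > 0"
    and M: "\<forall>x\<in>A. norm (f x) \<le> M" and x: "x \<in> cball z (e/2)" and y: "y \<in> cball z (e/2)"
  shows "norm (f x - f y) \<le> 4 * M / e * norm (x - y)"
proof (rule field_differentiable_bound[where S="cball z (e/2)" and f'="deriv f"])
  show "(f has_field_derivative deriv f u) (at u within cball z (e/2))" if "u \<in> cball z (e/2)" for u
  proof -
    have "u \<in> ball z e" using that e by simp
    then have "f field_differentiable at u"
      using holomorphic_on_imp_differentiable_at[of f "ball z e"] hol sub holomorphic_on_subset by blast
    then show ?thesis by (simp add: DERIV_deriv_iff_field_differentiable has_field_derivative_at_within)
  qed
  show "norm (deriv f u) \<le> 4 * M / e" if "u \<in> cball z (e/2)" for u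
  proof -
    have "ball u (e/2) \<subseteq> ball z e" using that by (simp add: ball_subset_ball_iff dist_commute)
    then have "norm (deriv f u) \<le> 2 * M / (e/2)"
      using Cauchy_deriv_bound[OF hol _ _ M, of u "e/2"] sub e by simp
    then show ?thesis by simp
  qed
qed (use x y in auto)

section \<open>Bounded functions holomorphic in each of two variables\<close>

definition bounded_holo2 :: "complex set \<Rightarrow> complex set \<Rightarrow> (complex \<Rightarrow> complex \<Rightarrow> complex) \<Rightarrow> bool" where
  "bounded_holo2 A B F \<longleftrightarrow> (\<forall>w\<in>B. (\<lambda>z. F z w) holomorphic_on A) \<and> (\<forall>z\<in>A. (\<lambda>w. F z w) holomorphic_on B)
     \<and> (\<exists>M. \<forall>z\<in>A. \<forall>w\<in>B. norm (F z w) \<le> M)"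

definition pderiv1 :: "(complex \<Rightarrow> complex \<Rightarrow> complex) \<Rightarrow> complex \<Rightarrow> complex \<Rightarrow> complex" where
  "pderiv1 F = (\<lambda>z w. deriv (\<lambda>s. F s w) z)"

definition pderiv2 :: "(complex \<Rightarrow> complex \<Rightarrow> complex) \<Rightarrow> complex \<Rightarrow> complex \<Rightarrow> complex" where
  "pderiv2 F = (\<lambda>z w. deriv (\<lambda>s. F z s) w)"

definition swap_args :: "(complex \<Rightarrow> complex \<Rightarrow> complex) \<Rightarrow> complex \<Rightarrow> complex \<Rightarrow> complex" where
  "swap_args F = (\<lambda>w z. F z w)"

lemma bounded_holo2_holomorphic1: "bounded_holo2 A B F \<Longrightarrow> w \<in> B \<Longrightarrow> (\<lambda>z. F z w) holomorphic_on A"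
  unfolding bounded_holo2_def by blast

lemma bounded_holo2_holomorphic2: "bounded_holo2 A B F \<Longrightarrow> z \<in> A \<Longrightarrow> (\<lambda>w. F z w) holomorphic_on B"
  unfolding bounded_holo2_def by blast

lemma bounded_holo2_boundE:
  assumes "bounded_holo2 A B F"
  obtains M where "\<forall>z\<in>A. \<forall>w\<in>B. norm (F z w) \<le> M"
  using assms unfolding bounded_holo2_def by blast

lemma bounded_holo2_swap: "bounded_holo2 A B F \<longleftrightarrow> bounded_holo2 B A (swap_args F)"
  unfolding bounded_holo2_def swap_args_def by blast

lemma pderiv2_swap: "pderiv2 F = swap_args (pderiv1 (swap_args F))"
  unfolding pderiv2_def pderiv1_def swap_args_def by simp

lemma swap_args_swap_args [simp]: "swap_args (swap_args F) = F"
  unfolding swap_args_def by simp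

lemma bounded_holo2_subset: "bounded_holo2 A B F \<Longrightarrow> A' \<subseteq> A \<Longrightarrow> B' \<subseteq> B \<Longrightarrow> bounded_holo2 A' B' F"
  unfolding bounded_holo2_def by (meson holomorphic_on_subset subsetD)

lemma bounded_holo2_cmult: "bounded_holo2 A B F \<Longrightarrow> bounded_holo2 A B (\<lambda>z w. c * F z w)"
proof -
  assume G: "bounded_holo2 A B F"
  then obtain M where M: "\<forall>z\<in>A. \<forall>w\<in>B. norm (F z w) \<le> M" by (rule bounded_holo2_boundE)
  have "\<forall>z\<in>A. \<forall>w\<in>B. norm (c * F z w) \<le> norm c * M"
    using M by (simp add: norm_mult mult_left_mono)
  then show ?thesis using G unfolding bounded_holo2_def by (auto intro!: holomorphic_intros)
qed

lemma bounded_holo2_diff: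
  "bounded_holo2 A B F \<Longrightarrow> bounded_holo2 A B G \<Longrightarrow> bounded_holo2 A B (\<lambda>z w. F z w - G z w)"
proof -
  assume F: "bounded_holo2 A B F" and G: "bounded_holo2 A B G"
  obtain M where M: "\<forall>z\<in>A. \<forall>w\<in>B. norm (F z w) \<le> M" using F by (rule bounded_holo2_boundE)
  obtain N where N: "\<forall>z\<in>A. \<forall>w\<in>B. norm (G z w) \<le> N" using G by (rule bounded_holo2_boundE)
  have "\<forall>z\<in>A. \<forall>w\<in>B. norm (F z w - G z w) \<le> M + N"
    using M N by (meson add_mono norm_triangle_ineq4 order_trans)
  then show ?thesis using F G unfolding bounded_holo2_def by (auto intro!: holomorphic_intros)
qed

text \<open>Boundedness makes the function locally Lipschitz in each variable, uniformly in the
  other one, which replaces Hartogs' theorem.\<close>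

lemma bounded_holo2_continuous_on:
  assumes G: "bounded_holo2 A B F" and A: "open A" and B: "open B"
  shows "continuous_on (A \<times> B) (\<lambda>p. F (fst p) (snd p))"
proof -
  obtain M where M: "\<forall>z\<in>A. \<forall>w\<in>B. norm (F z w) \<le> M" using G by (rule bounded_holo2_boundE)
  have "isCont (\<lambda>p. F (fst p) (snd p)) p" if p: "p \<in> A \<times> B" for p
  proof -
    obtain z0 w0 where p0: "p = (z0, w0)" "z0 \<in> A" "w0 \<in> B" using p by auto
    obtain e1 where e1: "e1 > 0" "ball z0 e1 \<subseteq> A" using A p0 openE by blast
    obtain e2 where e2: "e2 > 0" "ball w0 e2 \<subseteq> B" using B p0 openE by blast
    define e where "e = min e1 e2"
    have e: "e > 0" "ball z0 e \<subseteq> A" "ball w0 e \<subseteq> B" using e1 e2 unfolding e_def by auto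
    have M0: "M \<ge> 0" using M p0 norm_ge_zero order_trans by blast
    let ?S = "ball z0 (e/2) \<times> ball w0 (e/2)"
    have "lipschitz_on (8 * M / e) ?S (\<lambda>p. F (fst p) (snd p))"
    proof (rule lipschitz_onI)
      fix x y assume x: "x \<in> ?S" and y: "y \<in> ?S"
      then have fyA: "fst y \<in> A" and sxB: "snd x \<in> B" using e by (auto simp: mem_Times_iff)
      have 1: "norm (F (fst x) (snd x) - F (fst y) (snd x)) \<le> 4 * M / e * norm (fst x - fst y)"
        using holomorphic_lipschitz_half_cball[OF bounded_holo2_holomorphic1[OF G sxB] e(2,1)] M sxB x y
        by (auto simp: mem_Times_iff)
      have 2: "norm (F (fst y) (snd x) - F (fst y) (snd y)) \<le> 4 * M / e * norm (snd x - snd y)"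
        using holomorphic_lipschitz_half_cball[OF bounded_holo2_holomorphic2[OF G fyA] e(3,1)] M fyA x y
        by (auto simp: mem_Times_iff)
      have d1: "norm (fst x - fst y) \<le> dist x y" using dist_fst_le[of x y] by (simp add: dist_norm)
      have d2: "norm (snd x - snd y) \<le> dist x y" using dist_snd_le[of x y] by (simp add: dist_norm)
      have "dist (F (fst x) (snd x)) (F (fst y) (snd y))
          \<le> norm (F (fst x) (snd x) - F (fst y) (snd x)) + norm (F (fst y) (snd x) - F (fst y) (snd y))"
        by (metis dist_norm norm_triangle_ineq diff_add_cancel add_diff_eq)
      also have "\<dots> \<le> 4 * M / e * norm (fst x - fst y) + 4 * M / e * norm (snd x - snd y)"
        using 1 2 by simp
      also have "\<dots> \<le> 4 * M / e * dist x y + 4 * M / e * dist x y"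
        using d1 d2 M0 e(1) by (intro add_mono mult_left_mono) auto
      finally show "dist (F (fst x) (snd x)) (F (fst y) (snd y)) \<le> 8 * M / e * dist x y" by simp
    qed (use M0 e in simp)
    then have "continuous_on ?S (\<lambda>p. F (fst p) (snd p))" by (rule lipschitz_on_continuous_on)
    moreover have "p \<in> interior ?S" using p0 e by (simp add: interior_open open_Times)
    ultimately show ?thesis by (rule continuous_on_interior)
  qed
  then show ?thesis by (simp add: continuous_at_imp_continuous_on)
qed

lemma holomorphic_on_uniform_limit:
  assumes S: "open S" and hol: "\<forall>\<^sub>F n in F. f n holomorphic_on S"
    and lim: "uniform_limit S f g F" and F: "F \<noteq> bot"
  shows "g holomorphic_on S"
proof (rule holomorphic_onI)
  fix z assume "z \<in> S"
  then obtain r where r: "r > 0" "cball z r \<subseteq> S" using S open_contains_cball by blast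
  have "\<forall>\<^sub>F n in F. continuous_on (cball z r) (f n) \<and> f n holomorphic_on ball z r"
    using hol by eventually_elim (use r ball_subset_cball holomorphic_on_imp_continuous_on
        holomorphic_on_subset in blast)
  moreover have "uniform_limit (cball z r) f g F" using uniform_limit_on_subset[OF lim r(2)] .
  ultimately have "g holomorphic_on ball z r"
    by (rule holomorphic_uniform_limit) (use F in auto)
  then have "g field_differentiable at z"
    using r(1) by (auto intro: holomorphic_on_imp_differentiable_at)
  then show "g field_differentiable at z within S" by (rule field_differentiable_at_within)
qed

lemma uniform_limitI_majorant:
  fixes f :: "nat \<Rightarrow> 'a \<Rightarrow> 'b::metric_space"
  assumes "\<And>n x. x \<in> S \<Longrightarrow> dist (f n x) (l x) \<le> b n" and "b \<longlonglongrightarrow> 0"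
  shows "uniform_limit S f l sequentially"
proof (rule uniform_limitI)
  fix e :: real assume "e > 0"
  then have "eventually (\<lambda>n. b n < e) sequentially" using assms(2) by (simp add: order_tendstoD(2))
  then show "\<forall>\<^sub>F n in sequentially. \<forall>x\<in>S. dist (f n x) (l x) < e"
    by (rule eventually_mono) (use assms(1) le_less_trans in blast)
qed

lemma bounded_holo2_pderiv1:
  assumes G: "bounded_holo2 A B F" and A: "open A" and B: "open B" and e: "e > 0"
    and A': "\<And>z. z \<in> A' \<Longrightarrow> ball z e \<subseteq> A"
  shows "bounded_holo2 A' B (pderiv1 F)"
proof -
  obtain M where M: "\<forall>z\<in>A. \<forall>w\<in>B. norm (F z w) \<le> M" using G by (rule bounded_holo2_boundE)
  note hz = bounded_holo2_holomorphic1[OF G] and hw = bounded_holo2_holomorphic2[OF G]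
  have A'A: "A' \<subseteq> A" using A' e by (meson centre_in_ball subsetD subsetI)
  have holo1: "(\<lambda>z. pderiv1 F z w) holomorphic_on A'" if "w \<in> B" for w
    using holomorphic_deriv[OF hz[OF that] A] A'A unfolding pderiv1_def by (rule holomorphic_on_subset)
  have bound: "norm (pderiv1 F z w) \<le> 2 * M / e" if "z \<in> A'" "w \<in> B" for z w
    unfolding pderiv1_def using Cauchy_deriv_bound[OF hz[OF that(2)] A'[OF that(1)] e] M that(2) by blast
  have holo2: "(\<lambda>w. pderiv1 F z w) holomorphic_on B" if z: "z \<in> A'" for z
  proof -
    txt \<open>The difference quotients in the first variable converge uniformly in the second one.\<close>
    define h where "h n = complex_of_real (e / (4 * Suc n))" for n
    have norm_h: "norm (h n) = e / (4 * Suc n)" for n unfolding h_def norm_of_real using e by simp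
    have h: "norm (h n) < e/2" "h n \<noteq> 0" for n
    proof -
      have "e / (4 * Suc n) < e/2" using e by (intro divide_strict_left_mono) auto
      then show "norm (h n) < e/2" by (simp only: norm_h)
      have "norm (h n) > 0" using e by (simp only: norm_h) simp
      then show "h n \<noteq> 0" by auto
    qed
    have zA: "z \<in> A" and zhA: "z + h n \<in> A" for n
      using A'[OF z] h(1)[of n] e by (auto simp: dist_norm)
    define q where "q n w = (F (z + h n) w - F z w) / h n" for n w
    have "uniform_limit B q (\<lambda>w. pderiv1 F z w) sequentially"
    proof (rule uniform_limitI_majorant)
      fix n w assume w: "w \<in> B"
      have T: "norm (F (z + h n) w - F z w - h n * pderiv1 F z w) \<le> 32 * M / e^2 * norm (h n) ^ 2"
        using Taylor1_remainder_bound[OF hz[OF w] A A'[OF z] e _ h(1)] M w unfolding pderiv1_def by simp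
      have "q n w - pderiv1 F z w = (F (z + h n) w - F z w - h n * pderiv1 F z w) / h n"
        using h(2) unfolding q_def by (simp add: field_simps)
      then have "dist (q n w) (pderiv1 F z w) = norm (F (z + h n) w - F z w - h n * pderiv1 F z w) / norm (h n)"
        by (simp add: dist_norm norm_divide)
      also have "\<dots> \<le> 32 * M / e^2 * norm (h n) ^ 2 / norm (h n)"
        using T by (intro divide_right_mono) auto
      also have "\<dots> = 32 * M / e^2 * norm (h n)" using h(2) by (simp add: power2_eq_square)
      also have "\<dots> = 8 * M / e * (1 / Suc n)"
      proof -
        have eq: "32 * M / e^2 * (e / (4 * k)) = 8 * M / e * (1 / k)" if "k > 0" for k :: real
          using e that by (simp add: power2_eq_square field_simps)
        show ?thesis unfolding norm_h of_nat_mult of_nat_numeral by (rule eq) (simp del: of_nat_Suc)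
      qed
      finally show "dist (q n w) (pderiv1 F z w) \<le> 8 * M / e * (1 / Suc n)" .
    qed (intro tendsto_mult_right_zero LIMSEQ_Suc lim_const_over_n[of 1, simplified])
    moreover have "q n holomorphic_on B" for n
      unfolding q_def using hw[OF zA] hw[OF zhA[of n]] h(2) by (intro holomorphic_intros) auto
    ultimately show ?thesis by (intro holomorphic_on_uniform_limit[OF B]) auto
  qed
  show ?thesis unfolding bounded_holo2_def using holo1 holo2 bound by blast
qed

lemma bounded_holo2_pderiv2:
  assumes G: "bounded_holo2 A B F" and A: "open A" and B: "open B" and e: "e > 0"
    and B': "\<And>w. w \<in> B' \<Longrightarrow> ball w e \<subseteq> B"
  shows "bounded_holo2 A B' (pderiv2 F)"
proof -
  have "bounded_holo2 B' A (pderiv1 (swap_args F))"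
    using bounded_holo2_pderiv1 G B A e B' bounded_holo2_swap by blast
  then show ?thesis unfolding pderiv2_swap using bounded_holo2_swap swap_args_swap_args by metis
qed

text \<open>The difference quotient of \<open>F\<close> in the second variable, minus \<open>pderiv2 F\<close>, is holomorphic in
  the first variable and of size \<open>O(|v - w|)\<close>; a Cauchy estimate transfers this bound to its
  derivative.\<close>

lemma pderiv1_difference_quotient2_bound:
  assumes G: "bounded_holo2 A B F" and A: "open A" and B: "open B" and e: "e > 0"
    and z: "ball z e \<subseteq> A" and w: "ball w e \<subseteq> B" and M: "\<forall>z\<in>A. \<forall>w\<in>B. norm (F z w) \<le> M"
    and v: "v \<in> ball w (e/2)" "v \<noteq> w"
  shows "norm ((pderiv1 F z v - pderiv1 F z w) / (v - w) - pderiv1 (pderiv2 F) z w) \<le> 64 * M / e^3 * norm (v - w)"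
proof -
  note hz = bounded_holo2_holomorphic1[OF G] and hw = bounded_holo2_holomorphic2[OF G]
  have zA: "z \<in> A" and wB: "w \<in> B" using z w e by auto
  have "ball w (e/2) \<subseteq> ball w e" using e by (simp add: ball_subset_ball_iff)
  then have vB: "v \<in> B" using v w by blast
  have "bounded_holo2 A {w} (pderiv2 F)" using bounded_holo2_pderiv2[OF G A B e, of "{w}"] w by blast
  then have hDw: "(\<lambda>s. pderiv2 F s w) holomorphic_on A" by (rule bounded_holo2_holomorphic1) simp
  define d where "d = v - w"
  have d: "norm d < e/2" "d \<noteq> 0" using v unfolding d_def by (auto simp: dist_norm norm_minus_commute)
  define Q where "Q = (\<lambda>s. (F s v - F s w) / (v - w) - pderiv2 F s w)"
  have Qh: "Q holomorphic_on A" unfolding Q_def using hz[OF vB] hz[OF wB] hDw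
    by (intro holomorphic_intros) auto
  have QM: "\<forall>s\<in>A. norm (Q s) \<le> 32 * M / e^2 * norm (v - w)"
  proof
    fix s assume s: "s \<in> A"
    have T: "norm (F s (w + d) - F s w - d * pderiv2 F s w) \<le> 32 * M / e^2 * norm d ^ 2"
      using Taylor1_remainder_bound[OF hw[OF s] B w e _ d(1)] M s unfolding pderiv2_def by simp
    have "Q s = (F s (w + d) - F s w - d * pderiv2 F s w) / d"
      unfolding Q_def d_def using d(2) unfolding d_def by (simp add: field_simps)
    then have "norm (Q s) = norm (F s (w + d) - F s w - d * pderiv2 F s w) / norm d"
      by (simp add: norm_divide)
    also have "\<dots> \<le> 32 * M / e^2 * norm d ^ 2 / norm d"
      using T by (intro divide_right_mono) auto
    also have "\<dots> = 32 * M / e^2 * norm d" using d(2) by (simp add: power2_eq_square)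
    finally show "norm (Q s) \<le> 32 * M / e^2 * norm (v - w)" unfolding d_def .
  qed
  have "norm (deriv Q z) \<le> 2 * (32 * M / e^2 * norm (v - w)) / e"
    by (rule Cauchy_deriv_bound[OF Qh z e QM])
  also have "\<dots> = 64 * M / e^3 * norm (v - w)" by (simp add: power3_eq_cube power2_eq_square)
  finally have bd: "norm (deriv Q z) \<le> 64 * M / e^3 * norm (v - w)" .
  have "((\<lambda>s. F s v) has_field_derivative pderiv1 F z v) (at z)"
    "((\<lambda>s. F s w) has_field_derivative pderiv1 F z w) (at z)"
    "((\<lambda>s. pderiv2 F s w) has_field_derivative pderiv1 (pderiv2 F) z w) (at z)"
    unfolding pderiv1_def using holomorphic_derivI[OF _ A zA] hz[OF vB] hz[OF wB] hDw by auto
  then have "(Q has_field_derivative (pderiv1 F z v - pderiv1 F z w) / (v - w) - pderiv1 (pderiv2 F) z w) (at z)"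
    unfolding Q_def by (intro DERIV_diff DERIV_cdivide)
  then show ?thesis using bd DERIV_imp_deriv by metis
qed

lemma pderiv_commute:
  assumes G: "bounded_holo2 A B F" and A: "open A" and B: "open B" and e: "e > 0"
    and z: "ball z e \<subseteq> A" and w: "ball w e \<subseteq> B"
  shows "pderiv2 (pderiv1 F) z w = pderiv1 (pderiv2 F) z w"
proof -
  obtain M where M: "\<forall>z\<in>A. \<forall>w\<in>B. norm (F z w) \<le> M" using G by (rule bounded_holo2_boundE)
  define D where "D = pderiv1 (pderiv2 F) z w"
  have ev: "\<forall>\<^sub>F v in at w. norm ((pderiv1 F z v - pderiv1 F z w) / (v - w) - D) \<le> 64 * M / e^3 * norm (v - w)"
    unfolding eventually_at D_def using e pderiv1_difference_quotient2_bound[OF assms M]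
    by (intro exI[of _ "e/2"]) (auto simp: dist_commute)
  have "((\<lambda>v. 64 * M / e^3 * norm (v - w)) \<longlongrightarrow> 0) (at w)"
    by (intro tendsto_mult_right_zero tendsto_norm_zero LIM_zero tendsto_ident_at)
  then have "((\<lambda>v. (pderiv1 F z v - pderiv1 F z w) / (v - w) - D) \<longlongrightarrow> 0) (at w)"
    by (rule Lim_null_comparison[OF ev])
  then have "((\<lambda>v. pderiv1 F z v) has_field_derivative D) (at w)"
    by (simp add: has_field_derivative_iff LIM_zero_cancel)
  then show ?thesis unfolding D_def pderiv2_def[of "pderiv1 F"] by (rule DERIV_imp_deriv)
qed

lemma bounded_holo2_pderiv1_iter:
  assumes G: "bounded_holo2 (strip a) B G" and B: "open B" and e: "e > 0"
  shows "bounded_holo2 (strip (a - real i * e)) B ((pderiv1 ^^ i) G)"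
proof (induction i)
  case 0 then show ?case using G by simp
next
  case (Suc i)
  have "bounded_holo2 (strip (a - real (Suc i) * e)) B (pderiv1 ((pderiv1 ^^ i) G))"
  proof (rule bounded_holo2_pderiv1[OF Suc.IH open_strip B e])
    fix z assume "z \<in> strip (a - real (Suc i) * e)"
    then show "ball z e \<subseteq> strip (a - real i * e)"
      using ball_subset_strip[of z "a - real (Suc i) * e" "a - real i * e"] e by (simp add: algebra_simps)
  qed
  then show ?case by simp
qed

lemma bounded_holo2_pderiv2_iter:
  assumes G: "bounded_holo2 A (ball 0 c) G" and A: "open A" and e: "e > 0"
  shows "bounded_holo2 A (ball 0 (c - real j * e)) ((pderiv2 ^^ j) G)"
proof (induction j)
  case 0 then show ?case using G by simp
next
  case (Suc j)
  have "bounded_holo2 A (ball 0 (c - real (Suc j) * e)) (pderiv2 ((pderiv2 ^^ j) G))"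
  proof (rule bounded_holo2_pderiv2[OF Suc.IH A open_ball e])
    fix w :: complex assume "w \<in> ball 0 (c - real (Suc j) * e)"
    then show "ball w e \<subseteq> ball 0 (c - real j * e)"
      by (auto simp: ball_subset_ball_iff dist_commute algebra_simps)
  qed
  then show ?case by simp
qed

lemma pderiv_commute_iter:
  assumes G: "bounded_holo2 (strip a) (ball 0 c) G" and e: "e > 0"
  shows "\<forall>z\<in>strip (a - real (Suc i) * e). \<forall>w\<in>ball 0 (c - e). pderiv2 ((pderiv1 ^^ i) G) z w = (pderiv1 ^^ i) (pderiv2 G) z w"
proof (induction i)
  case 0 then show ?case by simp
next
  case (Suc i)
  show ?case
  proof (intro ballI)
    fix z w assume z: "z \<in> strip (a - real (Suc (Suc i)) * e)" and w: "w \<in> ball (0::complex) (c - e)"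
    have Gi: "bounded_holo2 (strip (a - real i * e)) (ball 0 c) ((pderiv1 ^^ i) G)"
      by (rule bounded_holo2_pderiv1_iter[OF G open_ball e])
    have bz: "ball z e \<subseteq> strip (a - real (Suc i) * e)"
      using ball_subset_strip[OF z, of "a - real (Suc i) * e"] e by (simp add: algebra_simps)
    have "strip (a - real (Suc i) * e) \<subseteq> strip (a - real i * e)" using e by (intro strip_mono) simp
    then have bz': "ball z e \<subseteq> strip (a - real i * e)" using bz by blast
    have bw: "ball w e \<subseteq> ball 0 c" using w by (auto simp: ball_subset_ball_iff dist_commute)
    have "pderiv2 (pderiv1 ((pderiv1 ^^ i) G)) z w = pderiv1 (pderiv2 ((pderiv1 ^^ i) G)) z w"
      by (rule pderiv_commute[OF Gi open_strip open_ball e bz' bw])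
    also have "\<dots> = pderiv1 ((pderiv1 ^^ i) (pderiv2 G)) z w"
    proof -
      have zin: "z \<in> strip (a - real (Suc i) * e)" using bz e by (meson centre_in_ball subsetD)
      have "eventually (\<lambda>s. pderiv2 ((pderiv1 ^^ i) G) s w = (pderiv1 ^^ i) (pderiv2 G) s w) (nhds z)"
        using eventually_nhds_in_open[OF open_strip zin] Suc.IH w
        by (auto elim!: eventually_mono)
      then show ?thesis unfolding pderiv1_def by (rule deriv_cong_ev) simp
    qed
    finally show "pderiv2 ((pderiv1 ^^ Suc i) G) z w = (pderiv1 ^^ Suc i) (pderiv2 G) z w" by simp
  qed
qed

lemma bounded_holo2_mixed_pderivs:
  assumes G: "bounded_holo2 (strip a) (ball 0 b) F" and "0 < a" "0 < b" "i \<le> 3" "j \<le> 3"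
  shows "bounded_holo2 (strip (a/2)) (ball 0 (b/2)) ((pderiv1 ^^ i) ((pderiv2 ^^ j) F))"
proof -
  define e where "e = min (a/8) (b/8)"
  have e: "e > 0" "e \<le> a/8" "e \<le> b/8" unfolding e_def using assms by auto
  have "bounded_holo2 (strip a) (ball 0 (b - real j * e)) ((pderiv2 ^^ j) F)"
    by (rule bounded_holo2_pderiv2_iter[OF G open_strip e(1)])
  then have "bounded_holo2 (strip (a - real i * e)) (ball 0 (b - real j * e)) ((pderiv1 ^^ i) ((pderiv2 ^^ j) F))"
    by (rule bounded_holo2_pderiv1_iter[OF _ open_ball e(1)])
  moreover have "real i * e \<le> 3 * (a/8)" "real j * e \<le> 3 * (b/8)" using assms e by (intro mult_mono; simp)+
  then have "strip (a/2) \<subseteq> strip (a - real i * e)" "ball 0 (b/2) \<subseteq> ball 0 (b - real j * e)"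
    using assms(2,3) by (intro strip_mono subset_ball; linarith)+
  ultimately show ?thesis by (rule bounded_holo2_subset)
qed

lemma pderiv2_mixed_pderivs:
  assumes G: "bounded_holo2 (strip a) (ball 0 b) F" and "0 < a" "0 < b" "i + j < 3"
    and z: "z \<in> strip (a/2)" and w: "w \<in> ball 0 (b/2)"
  shows "pderiv2 ((pderiv1 ^^ i) ((pderiv2 ^^ j) F)) z w = (pderiv1 ^^ i) ((pderiv2 ^^ Suc j) F) z w"
proof -
  define e where "e = min (a/8) (b/8)"
  have e: "e > 0" "e \<le> a/8" "e \<le> b/8" unfolding e_def using assms by auto
  have "bounded_holo2 (strip a) (ball 0 (b - real j * e)) ((pderiv2 ^^ j) F)"
    by (rule bounded_holo2_pderiv2_iter[OF G open_strip e(1)])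
  note commute = pderiv_commute_iter[OF this e(1), of i]
  have "real (Suc i) * e \<le> 3 * (a/8)" "real (Suc j) * e \<le> 3 * (b/8)" using assms e by (intro mult_mono; simp)+
  then have "strip (a/2) \<subseteq> strip (a - real (Suc i) * e)" "ball 0 (b/2) \<subseteq> ball 0 (b - real j * e - e)"
    using assms(2,3) by (intro strip_mono subset_ball; simp add: algebra_simps)+
  then have "z \<in> strip (a - real (Suc i) * e)" "w \<in> ball 0 (b - real j * e - e)" using z w by blast+
  then show ?thesis using commute by simp
qed

lemma has_real_derivative_Re_pderiv1:
  assumes "(\<lambda>s. G s w) holomorphic_on A" "open A" "of_real \<theta> \<in> A"
  shows "((\<lambda>s. Re (G (of_real s) w)) has_real_derivative Re (pderiv1 G (of_real \<theta>) w)) (at \<theta> within X)"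
proof -
  have "((\<lambda>s. G s w) has_field_derivative pderiv1 G (of_real \<theta>) w) (at (of_real \<theta>))"
    unfolding pderiv1_def using holomorphic_derivI[OF assms] .
  then have "((\<lambda>x. G (of_real x) w) has_vector_derivative pderiv1 G (of_real \<theta>) w) (at \<theta> within X)"
    by (rule has_vector_derivative_real_field)
  then have "((\<lambda>x. Re (G (of_real x) w)) has_vector_derivative Re (pderiv1 G (of_real \<theta>) w)) (at \<theta> within X)"
    by (rule bounded_linear.has_vector_derivative[OF bounded_linear_Re])
  then show ?thesis by (simp add: has_real_derivative_iff_has_vector_derivative)
qed

lemma has_real_derivative_Re_pderiv2:
  assumes "(\<lambda>s. G z s) holomorphic_on B" "open B" "of_real m \<in> B"
  shows "((\<lambda>s. Re (G z (of_real s))) has_real_derivative Re (pderiv2 G z (of_real m))) (at m within X)"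
proof -
  have "((\<lambda>s. G z s) has_field_derivative pderiv2 G z (of_real m)) (at (of_real m))"
    unfolding pderiv2_def using holomorphic_derivI[OF assms] .
  then have "((\<lambda>x. G z (of_real x)) has_vector_derivative pderiv2 G z (of_real m)) (at m within X)"
    by (rule has_vector_derivative_real_field)
  then have "((\<lambda>x. Re (G z (of_real x))) has_vector_derivative Re (pderiv2 G z (of_real m))) (at m within X)"
    by (rule bounded_linear.has_vector_derivative[OF bounded_linear_Re])
  then show ?thesis by (simp add: has_real_derivative_iff_has_vector_derivative)
qed

lemma mixed_pderivs_uniform_bound:
  assumes G: "bounded_holo2 (strip a) (ball 0 b) F" and "0 < a" "0 < b"
  obtains K where "\<And>i j z w. i + j \<le> 3 \<Longrightarrow> z \<in> strip (a/2) \<Longrightarrow> w \<in> ball 0 (b/2) \<Longrightarrow>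
    norm ((pderiv1 ^^ i) ((pderiv2 ^^ j) F) z w) \<le> K"
proof -
  have "\<forall>i j. \<exists>M. i + j \<le> 3 \<longrightarrow> (\<forall>z\<in>strip (a/2). \<forall>w\<in>ball 0 (b/2). norm ((pderiv1 ^^ i) ((pderiv2 ^^ j) F) z w) \<le> M)"
    using bounded_holo2_mixed_pderivs[OF assms] unfolding bounded_holo2_def by (metis add_leE)
  then obtain M where M: "\<And>i j. i + j \<le> 3 \<Longrightarrow>
      \<forall>z\<in>strip (a/2). \<forall>w\<in>ball 0 (b/2). norm ((pderiv1 ^^ i) ((pderiv2 ^^ j) F) z w) \<le> M i j"
    by metis
  have "M i j \<le> (\<Sum>i\<le>3. \<Sum>j\<le>3. \<bar>M i j\<bar>)" if "i + j \<le> 3" for i j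
  proof -
    have "\<bar>M i j\<bar> \<le> (\<Sum>j\<le>3. \<bar>M i j\<bar>)" using that by (intro member_le_sum) auto
    then have "M i j \<le> (\<Sum>j\<le>3. \<bar>M i j\<bar>)" by linarith
    also have "\<dots> \<le> (\<Sum>i\<le>3. \<Sum>j\<le>3. \<bar>M i j\<bar>)"
      using that by (intro member_le_sum[where f="\<lambda>i. \<Sum>j\<le>3. \<bar>M i j\<bar>"]) (auto intro: sum_nonneg)
    finally show ?thesis .
  qed
  then show ?thesis using M that by (meson order_trans)
qed

text \<open>At real points the real parts of the complex partial derivatives are the real partial
  derivatives (in \<open>\<mu>\<close> one-sided at the ends of \<open>[0, \<mu>0]\<close>).\<close>

lemma C3_bounded_Re_bounded_holo2:
  assumes G: "bounded_holo2 (strip 1) (ball 0 b) F" and m0: "0 < \<mu>0" "\<mu>0 < b/2"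
  shows "\<exists>K. C3_bounded {0..\<mu>0} K (\<lambda>\<theta> m. Re (F (of_real \<theta>) (of_real m)))"
proof -
  have b: "b > 0" using m0 by simp
  define D where "D i j = (pderiv1 ^^ i) ((pderiv2 ^^ j) F)" for i j
  define A' where "A' = strip (1/2)"
  define B' where "B' = ball (0::complex) (b/2)"
  have GD: "bounded_holo2 A' B' (D i j)" if "i + j \<le> 3" for i j
    unfolding A'_def B'_def D_def using bounded_holo2_mixed_pderivs[OF G _ b] that by simp
  obtain K where K: "\<And>i j z w. i + j \<le> 3 \<Longrightarrow> z \<in> A' \<Longrightarrow> w \<in> B' \<Longrightarrow> norm (D i j z w) \<le> K"
    using mixed_pderivs_uniform_bound[OF G _ b] unfolding A'_def B'_def D_def by auto
  define P where "P i j \<theta> m = Re (D i j (of_real \<theta>) (of_real m))" for i j \<theta> m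
  have inA: "(of_real \<theta> :: complex) \<in> A'" for \<theta> unfolding A'_def by (simp add: of_real_in_strip)
  have inB: "(of_real m :: complex) \<in> B'" if "m \<in> {0..\<mu>0}" for m using that m0 unfolding B'_def by auto
  have "C3_bounded {0..\<mu>0} K (\<lambda>\<theta> m. Re (F (of_real \<theta>) (of_real m)))"
    unfolding C3_bounded_def
  proof (intro exI[of _ P] conjI allI impI ballI)
    show "P 0 0 = (\<lambda>\<theta> m. Re (F (of_real \<theta>) (of_real m)))" unfolding P_def D_def by simp
  next
    fix i j :: nat and \<theta> m :: real assume ij: "i + j < 3" and m: "m \<in> {0..\<mu>0}"
    have G': "bounded_holo2 A' B' (D i j)" using GD ij by simp
    have "((\<lambda>s. P i j s m) has_real_derivative Re (pderiv1 (D i j) (of_real \<theta>) (of_real m))) (at \<theta>)"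
      unfolding P_def
      by (rule has_real_derivative_Re_pderiv1[of "D i j" "of_real m" A' \<theta>,
          OF bounded_holo2_holomorphic1[OF G' inB[OF m]] _ inA])
        (simp add: A'_def open_strip)
    then show "((\<lambda>s. P i j s m) has_real_derivative P (Suc i) j \<theta> m) (at \<theta>)"
      unfolding P_def D_def by simp
    have "((\<lambda>s. P i j \<theta> s) has_real_derivative Re (pderiv2 (D i j) (of_real \<theta>) (of_real m))) (at m within {0..\<mu>0})"
      unfolding P_def
      by (rule has_real_derivative_Re_pderiv2[of "D i j" "of_real \<theta>" B' m,
          OF bounded_holo2_holomorphic2[OF G' inA] _ inB[OF m]])
        (simp add: B'_def)
    then show "((\<lambda>s. P i j \<theta> s) has_real_derivative P i (Suc j) \<theta> m) (at m within {0..\<mu>0})"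
      unfolding P_def D_def using pderiv2_mixed_pderivs[OF G _ b ij, of "of_real \<theta>" "of_real m"] inA inB[OF m]
      by (simp add: A'_def B'_def)
  next
    fix i j :: nat assume ij: "i + j \<le> 3"
    have "continuous_on (A' \<times> B') (\<lambda>p. D i j (fst p) (snd p))"
      using bounded_holo2_continuous_on[OF GD[OF ij]] unfolding A'_def B'_def by (simp add: open_strip)
    then have "continuous_on (UNIV \<times> {0..\<mu>0})
        (\<lambda>p. (\<lambda>p. D i j (fst p) (snd p)) (of_real (fst p) :: complex, of_real (snd p) :: complex))"
      by (rule continuous_on_compose2) (use inA inB in \<open>auto intro!: continuous_intros\<close>)
    then show "continuous_on (UNIV \<times> {0..\<mu>0}) (\<lambda>(\<theta>, m). P i j \<theta> m)"
      unfolding P_def by (auto simp: case_prod_unfold intro!: continuous_intros)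
  next
    fix i j :: nat and \<theta> m :: real assume ij: "i + j \<le> 3" and m: "m \<in> {0..\<mu>0}"
    have "\<bar>P i j \<theta> m\<bar> \<le> norm (D i j (of_real \<theta>) (of_real m))" unfolding P_def by (rule abs_Re_le_cmod)
    also have "\<dots> \<le> K" using K[OF ij inA inB[OF m]] .
    finally show "\<bar>P i j \<theta> m\<bar> \<le> K" .
  qed
  then show ?thesis by blast
qed

lemma C3_bounded_mono:
  assumes "C3_bounded M K f" "K \<le> K'"
  shows "C3_bounded M K' f"
proof -
  obtain P where P: "P 0 0 = f"
    "\<forall>i j. i + j < 3 \<longrightarrow> (\<forall>\<theta>. \<forall>m\<in>M.
         ((\<lambda>s. P i j s m) has_real_derivative P (Suc i) j \<theta> m) (at \<theta>) \<and>
         ((\<lambda>s. P i j \<theta> s) has_real_derivative P i (Suc j) \<theta> m) (at m within M))"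
    "\<forall>i j. i + j \<le> 3 \<longrightarrow> continuous_on (UNIV \<times> M) (\<lambda>(\<theta>, m). P i j \<theta> m) \<and>
         (\<forall>\<theta>. \<forall>m\<in>M. \<bar>P i j \<theta> m\<bar> \<le> K)"
    using assms(1) unfolding C3_bounded_def by blast
  show ?thesis unfolding C3_bounded_def
  proof (intro exI[of _ P] conjI allI impI ballI)
    fix i j :: nat and \<theta> m assume "i + j \<le> 3" "m \<in> M"
    then show "\<bar>P i j \<theta> m\<bar> \<le> K'" using P(3) assms(2) by (meson order_trans)
  qed (use P in auto)
qed

section \<open>Holomorphic extension of real analytic functions\<close>

text \<open>\<open>hc\<close> extends \<open>h\<close> from the square \<open>[-r, r]\<^sup>2\<close>, is bounded by \<open>S\<close> on the complex bidisc of
  radius \<open>r\<close>, and composes holomorphically with holomorphic maps into that bidisc, which is all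
  we use of joint holomorphy.\<close>

definition holomorphic_extension ::
    "real \<Rightarrow> real \<Rightarrow> (real \<Rightarrow> real \<Rightarrow> real) \<Rightarrow> (complex \<Rightarrow> complex \<Rightarrow> complex) \<Rightarrow> bool" where
  "holomorphic_extension r S h hc \<longleftrightarrow>
     (\<forall>X A B. open X \<longrightarrow> A holomorphic_on X \<longrightarrow> B holomorphic_on X \<longrightarrow>
        (\<forall>s\<in>X. norm (A s) \<le> r \<and> norm (B s) \<le> r) \<longrightarrow> (\<lambda>s. hc (A s) (B s)) holomorphic_on X) \<and>
     (\<forall>z w. norm z \<le> r \<longrightarrow> norm w \<le> r \<longrightarrow> norm (hc z w) \<le> S) \<and>
     (\<forall>x y. \<bar>x\<bar> \<le> r \<longrightarrow> \<bar>y\<bar> \<le> r \<longrightarrow> hc (of_real x) (of_real y) = of_real (h x y))"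

lemma holomorphic_extension_holomorphic:
  "holomorphic_extension r S h hc \<Longrightarrow> open X \<Longrightarrow> A holomorphic_on X \<Longrightarrow> B holomorphic_on X \<Longrightarrow>
     (\<And>s. s \<in> X \<Longrightarrow> norm (A s) \<le> r \<and> norm (B s) \<le> r) \<Longrightarrow> (\<lambda>s. hc (A s) (B s)) holomorphic_on X"
  unfolding holomorphic_extension_def by blast

lemma holomorphic_extension_bound:
  "holomorphic_extension r S h hc \<Longrightarrow> norm z \<le> r \<Longrightarrow> norm w \<le> r \<Longrightarrow> norm (hc z w) \<le> S"
  unfolding holomorphic_extension_def by blast

lemma holomorphic_extension_of_real:
  "holomorphic_extension r S h hc \<Longrightarrow> \<bar>x\<bar> \<le> r \<Longrightarrow> \<bar>y\<bar> \<le> r \<Longrightarrow> hc (of_real x) (of_real y) = of_real (h x y)"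
  unfolding holomorphic_extension_def by blast

lemma holomorphic_extension_mono:
  assumes "holomorphic_extension r S h hc" "r' \<le> r" "S \<le> S'"
  shows "holomorphic_extension r' S' h hc"
  using assms unfolding holomorphic_extension_def by (smt (verit, ccfv_threshold))

lemma holomorphic_extension_lipschitz:
  assumes hext: "holomorphic_extension r S h hc" and r: "r > 0"
    and "norm z \<le> r/2" "norm w \<le> r/2" "norm z' \<le> r/2" "norm w' \<le> r/2"
  shows "norm (hc z w - hc z' w') \<le> 4 * S / r * (norm (z - z') + norm (w - w'))"
proof -
  have bound: "\<forall>x\<in>ball 0 r. norm (hc x w') \<le> S" "\<forall>x\<in>ball 0 r. norm (hc z x) \<le> S"
    using holomorphic_extension_bound[OF hext] assms by auto
  have "(\<lambda>s. hc s w') holomorphic_on ball 0 r" "(\<lambda>s. hc z s) holomorphic_on ball 0 r"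
    using assms by (auto intro!: holomorphic_extension_holomorphic[OF hext] holomorphic_intros)
  from holomorphic_lipschitz_half_cball[OF this(1) subset_refl r bound(1)]
    holomorphic_lipschitz_half_cball[OF this(2) subset_refl r bound(2)] assms
  have "norm (hc z w' - hc z' w') \<le> 4 * S / r * norm (z - z')"
    "norm (hc z w - hc z w') \<le> 4 * S / r * norm (w - w')"
    by auto
  moreover have "norm (hc z w - hc z' w') \<le> norm (hc z w - hc z w') + norm (hc z w' - hc z' w')"
    by (rule order_trans[OF _ norm_triangle_ineq]) simp
  ultimately show ?thesis by (simp add: distrib_left)
qed

lemma double_power_series_holomorphic_extension:
  fixes c :: "nat \<Rightarrow> nat \<Rightarrow> real"
  assumes r: "r > 0"
    and hs: "\<And>x y. \<bar>x\<bar> \<le> r \<Longrightarrow> \<bar>y\<bar> \<le> r \<Longrightarrow>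
      ((\<lambda>p. c (fst p) (snd p) * x ^ fst p * y ^ snd p) has_sum h x y) UNIV"
  shows "\<exists>S hc. holomorphic_extension r S h hc"
proof -
  define M where "M p = \<bar>c (fst p) (snd p)\<bar> * r ^ fst p * r ^ snd p" for p
  have "(\<lambda>p. c (fst p) (snd p) * r ^ fst p * r ^ snd p) summable_on UNIV"
    using hs[of r r] r unfolding summable_on_def by auto
  then have "(\<lambda>p. norm (c (fst p) (snd p) * r ^ fst p * r ^ snd p)) summable_on UNIV"
    by (rule summable_on_iff_abs_summable_on_real[THEN iffD1])
  moreover have "(\<lambda>p. norm (c (fst p) (snd p) * r ^ fst p * r ^ snd p)) = M"
    unfolding M_def using r by (auto simp: abs_mult power_abs fun_eq_iff)
  ultimately have Msum: "M summable_on UNIV" by simp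
  define f where "f p z w = of_real (c (fst p) (snd p)) * z ^ fst p * w ^ snd p" for p and z w :: complex
  define hc where "hc z w = (\<Sum>\<^sub>\<infinity>p. f p z w)" for z w
  have fM: "norm (f p z w) \<le> M p" if "norm z \<le> r" "norm w \<le> r" for p z w
  proof -
    have "norm (f p z w) = \<bar>c (fst p) (snd p)\<bar> * norm z ^ fst p * norm w ^ snd p"
      unfolding f_def by (simp add: norm_mult norm_power)
    also have "\<dots> \<le> M p"
      unfolding M_def using that r by (intro mult_mono power_mono mult_nonneg_nonneg) auto
    finally show ?thesis .
  qed
  have "holomorphic_extension r (\<Sum>\<^sub>\<infinity>p. M p) h hc"
    unfolding holomorphic_extension_def
  proof (intro conjI allI impI)
    fix X and A B :: "complex \<Rightarrow> complex"
    assume X: "open X" and AB: "A holomorphic_on X" "B holomorphic_on X"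
      and small: "\<forall>s\<in>X. norm (A s) \<le> r \<and> norm (B s) \<le> r"
    have "uniform_limit X (\<lambda>P s. \<Sum>p\<in>P. f p (A s) (B s)) (\<lambda>s. hc (A s) (B s)) (finite_subsets_at_top UNIV)"
      unfolding hc_def by (rule Weierstrass_m_test_general[OF _ Msum]) (use small fM in blast)
    moreover have "(\<lambda>s. \<Sum>p\<in>P. f p (A s) (B s)) holomorphic_on X" for P
      unfolding f_def using AB by (intro holomorphic_intros) auto
    ultimately show "(\<lambda>s. hc (A s) (B s)) holomorphic_on X"
      by (intro holomorphic_on_uniform_limit[OF X]) auto
  next
    fix z w :: complex assume "norm z \<le> r" "norm w \<le> r"
    then have "(\<lambda>p. norm (f p z w)) summable_on UNIV" "\<forall>p. norm (f p z w) \<le> M p"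
      using summable_on_comparison_test[OF Msum] fM by auto
    then have "norm (hc z w) \<le> (\<Sum>\<^sub>\<infinity>p. norm (f p z w))"
      unfolding hc_def by (intro norm_infsum_bound)
    also have "\<dots> \<le> (\<Sum>\<^sub>\<infinity>p. M p)"
      using \<open>\<forall>p. norm (f p z w) \<le> M p\<close> by (intro infsum_mono Msum) (auto intro: \<open>(\<lambda>p. norm (f p z w)) summable_on UNIV\<close>)
    finally show "norm (hc z w) \<le> (\<Sum>\<^sub>\<infinity>p. M p)" .
  next
    fix x y :: real assume "\<bar>x\<bar> \<le> r" "\<bar>y\<bar> \<le> r"
    from has_sum_of_real[OF hs[OF this]]
    have "((\<lambda>p. f p (of_real x) (of_real y)) has_sum of_real (h x y)) UNIV"
      unfolding f_def by simp
    then show "hc (of_real x) (of_real y) = of_real (h x y)" unfolding hc_def by (rule infsumI)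
  qed
  then show ?thesis by blast
qed

lemma real_analytic2_holomorphic_extension:
  assumes "real_analytic2_on h U" "(0, 0) \<in> U"
  shows "\<exists>r>0. \<exists>S hc. holomorphic_extension r S h hc"
proof -
  obtain r c where r: "r > 0" and c: "\<And>x y. x^2 + y^2 < r^2 \<Longrightarrow>
      ((\<lambda>(i,j). c i j * x^i * y^j) has_sum h x y) UNIV"
    using assms unfolding real_analytic2_on_def by fastforce
  have "x^2 + y^2 < r^2" if "\<bar>x\<bar> \<le> r/2" "\<bar>y\<bar> \<le> r/2" for x y :: real
  proof -
    have "x^2 \<le> (r/2)^2" "y^2 \<le> (r/2)^2" using that r by (auto intro: power_mono simp flip: abs_le_square_iff)
    moreover have "(r/2)^2 = r^2/4" "r^2 > 0" using r by (auto simp: power2_eq_square)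
    ultimately show ?thesis by linarith
  qed
  then have "\<exists>S hc. holomorphic_extension (r/2) S h hc"
    using c r by (intro double_power_series_holomorphic_extension[where c=c]) (auto simp: case_prod_unfold)
  then show ?thesis using r half_gt_zero by blast
qed
section \<open>Integrals against an exponential kernel\<close>

definition kernel_int :: "real \<Rightarrow> real \<Rightarrow> (complex \<Rightarrow> complex \<Rightarrow> complex) \<Rightarrow> complex \<Rightarrow> complex \<Rightarrow> complex" where
  "kernel_int \<kappa> \<sigma> g z w = integral {0..2*pi} (\<lambda>t. of_real (exp (- \<kappa> * t)) * g (z + of_real (\<sigma> * t)) w)"

lemma kernel_int_integrand_continuous:
  assumes G: "bounded_holo2 (strip a) (ball 0 b) g" and z: "z \<in> strip a" and w: "w \<in> ball 0 b"
  shows "continuous_on {0..2*pi} (\<lambda>t. of_real (exp (- \<kappa> * t)) * g (z + of_real (\<sigma> * t)) w)"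
proof -
  have c: "continuous_on (strip a \<times> ball 0 b) (\<lambda>p. g (fst p) (snd p))"
    using bounded_holo2_continuous_on[OF G open_strip open_ball] .
  have sh: "z + of_real (\<sigma> * t) \<in> strip a" for t using z by simp
  have "continuous_on {0..2*pi} (\<lambda>t. (\<lambda>p. g (fst p) (snd p)) (z + of_real (\<sigma> * t), w))"
    by (rule continuous_on_compose2[OF c]) (use sh w in \<open>auto intro!: continuous_intros\<close>)
  then show ?thesis by (auto intro!: continuous_intros)
qed

lemma kernel_int_integrable:
  assumes G: "bounded_holo2 (strip a) (ball 0 b) g" and z: "z \<in> strip a" and w: "w \<in> ball 0 b"
  shows "(\<lambda>t. of_real (exp (- \<kappa> * t)) * g (z + of_real (\<sigma> * t)) w) integrable_on {0..2*pi}"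
  by (rule integrable_continuous_interval[OF kernel_int_integrand_continuous[OF assms]])

lemma kernel_int_has_integral:
  assumes "bounded_holo2 (strip a) (ball 0 b) g" "z \<in> strip a" "w \<in> ball 0 b"
  shows "((\<lambda>t. of_real (exp (- \<kappa> * t)) * g (z + of_real (\<sigma> * t)) w) has_integral kernel_int \<kappa> \<sigma> g z w) {0..2*pi}"
  unfolding kernel_int_def using kernel_int_integrable[OF assms] by (simp add: integrable_integral)

lemma norm_kernel_int_le:
  assumes G: "bounded_holo2 (strip a) (ball 0 b) g" and z: "z \<in> strip a" and w: "w \<in> ball 0 b"
    and M: "\<forall>z\<in>strip a. \<forall>w\<in>ball 0 b. norm (g z w) \<le> M" and k: "\<kappa> \<ge> 0"
  shows "norm (kernel_int \<kappa> \<sigma> g z w) \<le> 2 * pi * M"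
proof -
  have M0: "M \<ge> 0" using M z w norm_ge_zero order_trans by blast
  have "norm (kernel_int \<kappa> \<sigma> g z w) \<le> M * Henstock_Kurzweil_Integration.content (cbox 0 (2*pi))"
  proof (rule has_integral_bound[OF M0])
    show "((\<lambda>t. of_real (exp (- \<kappa> * t)) * g (z + of_real (\<sigma> * t)) w) has_integral kernel_int \<kappa> \<sigma> g z w) (cbox 0 (2*pi))"
      unfolding cbox_interval by (rule kernel_int_has_integral[OF G z w])
    show "norm (of_real (exp (- \<kappa> * t)) * g (z + of_real (\<sigma> * t)) w) \<le> M" if "t \<in> cbox 0 (2*pi)" for t
    proof -
      have "exp (- \<kappa> * t) \<le> 1" using that k by (auto simp: cbox_interval mult_nonneg_nonneg)
      moreover have "norm (g (z + of_real (\<sigma> * t)) w) \<le> M" using M z w by simp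
      ultimately have "exp (- \<kappa> * t) * norm (g (z + of_real (\<sigma> * t)) w) \<le> 1 * M"
        by (intro mult_mono) auto
      then show ?thesis by (simp add: norm_mult)
    qed
  qed
  then show ?thesis by (simp add: cbox_interval mult.commute)
qed

lemma kernel_int_has_pderiv1:
  assumes G: "bounded_holo2 (strip a) (ball 0 b) g" and z: "z \<in> strip a" and w: "w \<in> ball 0 b"
  shows "((\<lambda>z. kernel_int \<kappa> \<sigma> g z w) has_field_derivative
           integral {0..2*pi} (\<lambda>t. of_real (exp (- \<kappa> * t)) * pderiv1 g (z + of_real (\<sigma> * t)) w)) (at z)"
proof -
  define a' where "a' = (\<bar>Im z\<bar> + a) / 2"
  have a': "a' < a" "z \<in> strip a'" "0 < a'" using z unfolding a'_def strip_def by auto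
  let ?U = "strip a'"
  have sub: "ball x (a - a') \<subseteq> strip a" if "x \<in> ?U" for x using ball_subset_strip[OF that] a' by simp
  have GD: "bounded_holo2 ?U (ball 0 b) (pderiv1 g)"
    by (rule bounded_holo2_pderiv1[OF G open_strip open_ball _ sub]) (use a' in auto)
  have hz: "(\<lambda>s. g s w) holomorphic_on strip a" using G w by (rule bounded_holo2_holomorphic1)
  have Ust: "?U \<subseteq> strip a" using a' unfolding strip_def by auto
  have "((\<lambda>x. integral (cbox 0 (2*pi)) (\<lambda>t. of_real (exp (- \<kappa> * t)) * g (x + of_real (\<sigma> * t)) w))
        has_field_derivative integral (cbox 0 (2*pi)) (\<lambda>t. of_real (exp (- \<kappa> * t)) * pderiv1 g (z + of_real (\<sigma> * t)) w))
        (at z within ?U)"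
  proof (rule leibniz_rule_field_derivative[where fx="\<lambda>x t. of_real (exp (- \<kappa> * t)) * pderiv1 g (x + of_real (\<sigma> * t)) w"])
    fix x t assume x: "x \<in> ?U" and t: "t \<in> cbox 0 (2*pi)"
    have xs: "x + of_real (\<sigma> * t) \<in> strip a" using Ust x by auto
    have "((\<lambda>s. g s w) has_field_derivative pderiv1 g (x + of_real (\<sigma> * t)) w) (at (x + of_real (\<sigma> * t)))"
      unfolding pderiv1_def using holomorphic_derivI[OF hz open_strip xs] .
    then have "((\<lambda>x. g (x + of_real (\<sigma> * t)) w) has_field_derivative pderiv1 g (x + of_real (\<sigma> * t)) w) (at x)"
      by (simp add: DERIV_shift)
    then have "((\<lambda>x. of_real (exp (- \<kappa> * t)) * g (x + of_real (\<sigma> * t)) w) has_field_derivative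
                of_real (exp (- \<kappa> * t)) * pderiv1 g (x + of_real (\<sigma> * t)) w) (at x)"
      by (rule DERIV_cmult)
    then show "((\<lambda>x. of_real (exp (- \<kappa> * t)) * g (x + of_real (\<sigma> * t)) w) has_field_derivative
                of_real (exp (- \<kappa> * t)) * pderiv1 g (x + of_real (\<sigma> * t)) w) (at x within ?U)"
      by (rule has_field_derivative_at_within)
  next
    fix x assume x: "x \<in> ?U"
    then show "(\<lambda>t. of_real (exp (- \<kappa> * t)) * g (x + of_real (\<sigma> * t)) w) integrable_on cbox 0 (2*pi)"
      unfolding cbox_interval using kernel_int_integrable[OF G _ w] Ust by blast
  next
    have c: "continuous_on (?U \<times> ball 0 b) (\<lambda>p. pderiv1 g (fst p) (snd p))"
      using bounded_holo2_continuous_on[OF GD open_strip open_ball] .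
    have "continuous_on (?U \<times> cbox 0 (2*pi)) (\<lambda>p. (\<lambda>p. pderiv1 g (fst p) (snd p)) (fst p + of_real (\<sigma> * snd p), w))"
      by (rule continuous_on_compose2[OF c]) (use w in \<open>auto intro!: continuous_intros\<close>)
    then show "continuous_on (?U \<times> cbox 0 (2*pi)) (\<lambda>(x, t). of_real (exp (- \<kappa> * t)) * pderiv1 g (x + of_real (\<sigma> * t)) w)"
      by (auto simp: case_prod_unfold intro!: continuous_intros)
  next
    show "z \<in> ?U" "convex ?U" using a' convex_strip by auto
  qed
  then show ?thesis unfolding kernel_int_def cbox_interval using at_within_open[OF a'(2) open_strip] by simp
qed

lemma kernel_int_differentiable2:
  assumes G: "bounded_holo2 (strip a) (ball 0 b) g" and z: "z \<in> strip a" and w: "w \<in> ball 0 b"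
  shows "(\<lambda>w. kernel_int \<kappa> \<sigma> g z w) field_differentiable (at w)"
proof -
  define b' where "b' = (norm w + b) / 2"
  have b': "b' < b" "w \<in> ball 0 b'" using w unfolding b'_def by auto
  let ?U = "ball (0::complex) b'"
  have sub: "ball x (b - b') \<subseteq> ball 0 b" if "x \<in> ?U" for x
    using that by (auto simp: ball_subset_ball_iff dist_commute)
  have GD: "bounded_holo2 (strip a) ?U (pderiv2 g)"
    by (rule bounded_holo2_pderiv2[OF G open_strip open_ball _ sub]) (use b' in auto)
  note hw = bounded_holo2_holomorphic2[OF G]
  have Ub: "?U \<subseteq> ball 0 b" using b' by auto
  have "((\<lambda>x. integral (cbox 0 (2*pi)) (\<lambda>t. of_real (exp (- \<kappa> * t)) * g (z + of_real (\<sigma> * t)) x))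
        has_field_derivative integral (cbox 0 (2*pi)) (\<lambda>t. of_real (exp (- \<kappa> * t)) * pderiv2 g (z + of_real (\<sigma> * t)) w))
        (at w within ?U)"
  proof (rule leibniz_rule_field_derivative[where fx="\<lambda>x t. of_real (exp (- \<kappa> * t)) * pderiv2 g (z + of_real (\<sigma> * t)) x"])
    fix x t assume x: "x \<in> ?U" and t: "t \<in> cbox 0 (2*pi)"
    have zs: "z + of_real (\<sigma> * t) \<in> strip a" using z by simp
    have xb: "x \<in> ball 0 b" using x Ub by blast
    have "((\<lambda>s. g (z + of_real (\<sigma> * t)) s) has_field_derivative pderiv2 g (z + of_real (\<sigma> * t)) x) (at x)"
      unfolding pderiv2_def using holomorphic_derivI[OF hw[OF zs] open_ball xb] .
    then have "((\<lambda>x. of_real (exp (- \<kappa> * t)) * g (z + of_real (\<sigma> * t)) x) has_field_derivative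
                of_real (exp (- \<kappa> * t)) * pderiv2 g (z + of_real (\<sigma> * t)) x) (at x)"
      by (rule DERIV_cmult)
    then show "((\<lambda>x. of_real (exp (- \<kappa> * t)) * g (z + of_real (\<sigma> * t)) x) has_field_derivative
                of_real (exp (- \<kappa> * t)) * pderiv2 g (z + of_real (\<sigma> * t)) x) (at x within ?U)"
      by (rule has_field_derivative_at_within)
  next
    fix x assume x: "x \<in> ?U"
    then show "(\<lambda>t. of_real (exp (- \<kappa> * t)) * g (z + of_real (\<sigma> * t)) x) integrable_on cbox 0 (2*pi)"
      unfolding cbox_interval using kernel_int_integrable[OF G z] Ub by blast
  next
    have c: "continuous_on (strip a \<times> ?U) (\<lambda>p. pderiv2 g (fst p) (snd p))"
      using bounded_holo2_continuous_on[OF GD open_strip open_ball] .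
    have "continuous_on (?U \<times> cbox 0 (2*pi)) (\<lambda>p. (\<lambda>p. pderiv2 g (fst p) (snd p)) (z + of_real (\<sigma> * snd p), fst p))"
      by (rule continuous_on_compose2[OF c]) (use z in \<open>auto intro!: continuous_intros\<close>)
    then show "continuous_on (?U \<times> cbox 0 (2*pi)) (\<lambda>(x, t). of_real (exp (- \<kappa> * t)) * pderiv2 g (z + of_real (\<sigma> * t)) x)"
      by (auto simp: case_prod_unfold intro!: continuous_intros)
  next
    show "w \<in> ?U" "convex ?U" using b' by auto
  qed
  then show ?thesis unfolding kernel_int_def cbox_interval field_differentiable_def
    using at_within_open[OF b'(2) open_ball] by auto
qed

lemma bounded_holo2_kernel_int:
  assumes G: "bounded_holo2 (strip a) (ball 0 b) g" and k: "\<kappa> \<ge> 0"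
  shows "bounded_holo2 (strip a) (ball 0 b) (kernel_int \<kappa> \<sigma> g)"
proof -
  obtain M where M: "\<forall>z\<in>strip a. \<forall>w\<in>ball 0 b. norm (g z w) \<le> M" using G by (rule bounded_holo2_boundE)
  have 1: "(\<lambda>z. kernel_int \<kappa> \<sigma> g z w) holomorphic_on strip a" if "w \<in> ball 0 b" for w
    using kernel_int_has_pderiv1[OF G _ that] by (auto simp: holomorphic_on_open open_strip)
  have 2: "(\<lambda>w. kernel_int \<kappa> \<sigma> g z w) holomorphic_on ball 0 b" if "z \<in> strip a" for z
    using kernel_int_differentiable2[OF G that] by (auto simp: holomorphic_on_open field_differentiable_def)
  have 3: "\<forall>z\<in>strip a. \<forall>w\<in>ball 0 b. norm (kernel_int \<kappa> \<sigma> g z w) \<le> 2 * pi * M"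
    using norm_kernel_int_le[OF G _ _ M k] by blast
  show ?thesis unfolding bounded_holo2_def using 1 2 3 by blast
qed

lemma kernel_integrand_has_vector_derivative:
  assumes G: "bounded_holo2 (strip a) (ball 0 b) g" and z: "z \<in> strip a" and w: "w \<in> ball 0 b"
  shows "((\<lambda>t. of_real (exp (- \<kappa> * t)) * g (z + of_real (\<sigma> * t)) w) has_vector_derivative
           of_real \<sigma> * (of_real (exp (- \<kappa> * t)) * pderiv1 g (z + of_real (\<sigma> * t)) w)
           - of_real \<kappa> * (of_real (exp (- \<kappa> * t)) * g (z + of_real (\<sigma> * t)) w)) (at t within T)"
proof -
  have dE: "((\<lambda>t. of_real (exp (- \<kappa> * t)) :: complex) has_vector_derivative of_real (exp (- \<kappa> * t) * (- \<kappa>)))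
      (at t within T)"
    by (rule has_vector_derivative_of_real) (auto intro!: derivative_eq_intros)
  have "((\<lambda>s. g s w) has_field_derivative pderiv1 g (z + of_real \<sigma> * of_real t) w) (at (z + of_real \<sigma> * of_real t))"
    unfolding pderiv1_def using z by (intro holomorphic_derivI[OF bounded_holo2_holomorphic1[OF G w] open_strip]) simp
  moreover have "((\<lambda>s. z + of_real \<sigma> * s) has_field_derivative of_real \<sigma>) (at (of_real t))"
    by (auto intro!: derivative_eq_intros)
  ultimately have "((\<lambda>s. g (z + of_real \<sigma> * s) w) has_field_derivative
      pderiv1 g (z + of_real \<sigma> * of_real t) w * of_real \<sigma>) (at (of_real t))"
    using DERIV_chain2[of "\<lambda>s. g s w"] by simp
  then have "((\<lambda>x. g (z + of_real (\<sigma> * x)) w) has_vector_derivative pderiv1 g (z + of_real (\<sigma> * t)) w * of_real \<sigma>)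
      (at t within T)"
    using has_vector_derivative_real_field by (simp add: of_real_mult)
  from has_vector_derivative_mult[OF dE this] show ?thesis by (simp add: algebra_simps)
qed

text \<open>Integration by parts, using periodicity of \<open>g\<close> and \<open>\<sigma> = \<plusminus>1\<close> for the boundary term.\<close>

lemma kernel_int_pderiv1_by_parts:
  assumes G: "bounded_holo2 (strip a) (ball 0 b) g" and per: "\<forall>z w. g (z + of_real (2*pi)) w = g z w"
    and z: "z \<in> strip a" and w: "w \<in> ball 0 b" and s: "\<sigma> = 1 \<or> \<sigma> = -1"
  shows "integral {0..2*pi} (\<lambda>t. of_real (exp (- \<kappa> * t)) * pderiv1 g (z + of_real (\<sigma> * t)) w)
       = of_real \<sigma> * ((of_real (exp (- \<kappa> * (2*pi))) - 1) * g z w + of_real \<kappa> * kernel_int \<kappa> \<sigma> g z w)"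
proof -
  define A where "A t = of_real (exp (- \<kappa> * t)) * pderiv1 g (z + of_real (\<sigma> * t)) w" for t
  define B where "B t = of_real (exp (- \<kappa> * t)) * g (z + of_real (\<sigma> * t)) w" for t
  have ftc: "((\<lambda>t. of_real \<sigma> * A t - of_real \<kappa> * B t) has_integral (B (2*pi) - B 0)) {0..2*pi}"
    unfolding A_def B_def
    by (rule fundamental_theorem_of_calculus) (simp, rule kernel_integrand_has_vector_derivative[OF G z w])
  have "(B has_integral kernel_int \<kappa> \<sigma> g z w) {0..2*pi}"
    unfolding B_def by (rule kernel_int_has_integral[OF G z w])
  from has_integral_add[OF ftc has_integral_mult_right[OF this, of "of_real \<kappa>"]]
  have "((\<lambda>t. of_real \<sigma> * (of_real \<sigma> * A t)) has_integral
      of_real \<sigma> * ((B (2*pi) - B 0) + of_real \<kappa> * kernel_int \<kappa> \<sigma> g z w)) {0..2*pi}"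
    by (intro has_integral_mult_right) simp
  moreover have "of_real \<sigma> * (of_real \<sigma> * A t) = A t" for t
    using s by auto
  ultimately have Ai: "(A has_integral of_real \<sigma> * ((B (2*pi) - B 0) + of_real \<kappa> * kernel_int \<kappa> \<sigma> g z w)) {0..2*pi}"
    by simp
  have "g (z + of_real (\<sigma> * (2*pi))) w = g z w"
    using s per[rule_format, of z w] per[rule_format, of "z - of_real (2*pi)" w] by auto
  then have "B (2*pi) - B 0 = (of_real (exp (- \<kappa> * (2*pi))) - 1) * g z w"
    unfolding B_def by (simp add: algebra_simps)
  then show ?thesis using integral_unique[OF Ai] unfolding A_def by simp
qed

lemma kernel_int_has_pderiv1_periodic:
  assumes "bounded_holo2 (strip a) (ball 0 b) g" "\<forall>z w. g (z + of_real (2*pi)) w = g z w"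
    and "z \<in> strip a" "w \<in> ball 0 b" "\<sigma> = 1 \<or> \<sigma> = -1"
  shows "((\<lambda>z. kernel_int \<kappa> \<sigma> g z w) has_field_derivative
           of_real \<sigma> * ((of_real (exp (- \<kappa> * (2*pi))) - 1) * g z w + of_real \<kappa> * kernel_int \<kappa> \<sigma> g z w)) (at z)"
  using kernel_int_has_pderiv1[OF assms(1,3,4), of \<kappa> \<sigma>] kernel_int_pderiv1_by_parts[OF assms, of \<kappa>]
  by (simp only:)

lemma kernel_int_diff:
  assumes "bounded_holo2 (strip a) (ball 0 b) g" "bounded_holo2 (strip a) (ball 0 b) g'" "z \<in> strip a" "w \<in> ball 0 b"
  shows "kernel_int \<kappa> \<sigma> g z w - kernel_int \<kappa> \<sigma> g' z w = kernel_int \<kappa> \<sigma> (\<lambda>z w. g z w - g' z w) z w"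
proof -
  note i1 = kernel_int_integrable[OF assms(1,3,4), of \<kappa> \<sigma>]
  note i2 = kernel_int_integrable[OF assms(2,3,4), of \<kappa> \<sigma>]
  show ?thesis unfolding kernel_int_def integral_diff[OF i1 i2, symmetric] by (simp add: algebra_simps)
qed

lemma kernel_int_periodic:
  assumes "\<forall>z w. g (z + of_real (2*pi)) w = g z w"
  shows "kernel_int \<kappa> \<sigma> g (z + of_real (2*pi)) w = kernel_int \<kappa> \<sigma> g z w"
proof -
  have "g (z + of_real (2*pi) + of_real (\<sigma> * t)) w = g (z + of_real (\<sigma> * t)) w" for t
    using assms[rule_format, of "z + of_real (\<sigma> * t)" w] by (simp add: algebra_simps)
  then show ?thesis unfolding kernel_int_def by simp
qed

lemma kernel_int_real:
  assumes G: "bounded_holo2 (strip a) (ball 0 b) g" and a: "0 < a" and w: "(of_real y :: complex) \<in> ball 0 b"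
    and r: "\<And>x. g (of_real x) (of_real y) \<in> \<real>"
  shows "kernel_int \<kappa> \<sigma> g (of_real x) (of_real y) \<in> \<real>"
proof -
  let ?f = "\<lambda>t. of_real (exp (- \<kappa> * t)) * g (of_real x + of_real (\<sigma> * t)) (of_real y)"
  have "(?f has_integral kernel_int \<kappa> \<sigma> g (of_real x) (of_real y)) {0..2*pi}"
    using kernel_int_has_integral[OF G of_real_in_strip[OF a, of x] w] by simp
  then have "((Im \<circ> ?f) has_integral Im (kernel_int \<kappa> \<sigma> g (of_real x) (of_real y))) {0..2*pi}"
    by (rule has_integral_linear) (rule bounded_linear_Im)
  moreover have "(Im \<circ> ?f) = (\<lambda>t. 0)"
  proof
    fix t
    have "g (of_real (x + \<sigma> * t)) (of_real y) \<in> \<real>" by (rule r)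
    then have "?f t \<in> \<real>" by (simp add: of_real_add)
    then show "(Im \<circ> ?f) t = 0" by (simp add: complex_is_Real_iff)
  qed
  ultimately have "Im (kernel_int \<kappa> \<sigma> g (of_real x) (of_real y)) = 0"
    using has_integral_0 has_integral_unique by metis
  then show ?thesis by (simp add: complex_is_Real_iff)
qed

section \<open>The fixed point problem on complexified arguments\<close>

definition periodic_factor :: "real \<Rightarrow> real" where
  "periodic_factor k = 1 / (1 - exp (- k * (2*pi)))"

lemma periodic_factor_pos: "k > 0 \<Longrightarrow> periodic_factor k > 0"
  unfolding periodic_factor_def by simp

lemma periodic_factor_eq: "k > 0 \<Longrightarrow> periodic_factor k * (1 - exp (- k * (2*pi))) = 1"
  unfolding periodic_factor_def by simp

lemma sin_add_2pi_complex: "sin (z + 2 * of_real pi) = sin (z :: complex)"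
  by (simp add: sin_add flip: sin_of_real cos_of_real)

lemma norm_sin_le_exp_abs_Im: "norm (sin z) \<le> exp \<bar>Im z\<bar>"
proof -
  have "norm (sin z) = norm (exp(\<i> * z) - exp(-(\<i> * z))) / 2"
    unfolding sin_exp_eq by (simp add: norm_divide norm_mult)
  also have "\<dots> \<le> (norm (exp(\<i> * z)) + norm (exp(-(\<i> * z)))) / 2"
    by (intro divide_right_mono norm_triangle_ineq4) auto
  also have "\<dots> = (exp (- Im z) + exp (Im z)) / 2" by simp
  also have "\<dots> \<le> exp \<bar>Im z\<bar>" by (cases "Im z \<ge> 0") auto
  finally show ?thesis .
qed

lemma norm_sin_strip_1:
  assumes "z \<in> strip 1"
  shows "norm (sin z) \<le> exp 1"
proof -
  have "exp \<bar>Im z\<bar> \<le> exp 1" using assms by (simp add: strip_def)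
  then show ?thesis using norm_sin_le_exp_abs_Im[of z] by linarith
qed

locale forced_saddle =
  fixes \<alpha> \<beta> \<omega> \<rho> :: real and h1 h2 H :: "real \<Rightarrow> real \<Rightarrow> real"
    and h1c h2c Hc :: "complex \<Rightarrow> complex \<Rightarrow> complex" and r0 S :: real
  assumes \<alpha>: "\<alpha> > 0" and \<beta>: "\<beta> > 0" and \<omega>: "\<omega> > 0" and r0: "r0 > 0"
    and ext1: "holomorphic_extension r0 S h1 h1c"
    and ext2: "holomorphic_extension r0 S h2 h2c"
    and extH: "holomorphic_extension r0 S H Hc"
begin

definition "L = 4 * S / r0"

lemma holomorphic_extension_cases: "hc \<in> {h1c, h2c, Hc} \<Longrightarrow> \<exists>h. holomorphic_extension r0 S h hc"
  using ext1 ext2 extH by auto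

lemma ext_holomorphic:
  assumes "hc \<in> {h1c, h2c, Hc}" "open X" "A holomorphic_on X" "B holomorphic_on X"
    "\<forall>s\<in>X. norm (A s) \<le> r0 \<and> norm (B s) \<le> r0"
  shows "(\<lambda>s. hc (A s) (B s)) holomorphic_on X"
proof -
  obtain h where "holomorphic_extension r0 S h hc" using holomorphic_extension_cases[OF assms(1)] by blast
  from holomorphic_extension_holomorphic[OF this assms(2-4)] show ?thesis using assms(5) by blast
qed

lemma norm_ext_le:
  assumes "hc \<in> {h1c, h2c, Hc}" "norm z \<le> r0" "norm w \<le> r0"
  shows "norm (hc z w) \<le> S"
proof -
  obtain h where "holomorphic_extension r0 S h hc" using holomorphic_extension_cases[OF assms(1)] by blast
  from holomorphic_extension_bound[OF this assms(2,3)] show ?thesis .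
qed

lemma S_nonneg: "S \<ge> 0"
  using norm_ext_le[of Hc 0 0] r0 by (auto intro: order_trans[OF norm_ge_zero])

lemma L_nonneg: "L \<ge> 0"
  unfolding L_def using S_nonneg r0 by simp

lemma ext_lipschitz:
  assumes "hc \<in> {h1c, h2c, Hc}" "norm z \<le> r0/2" "norm w \<le> r0/2" "norm z' \<le> r0/2" "norm w' \<le> r0/2"
  shows "norm (hc z w - hc z' w') \<le> L * (norm (z - z') + norm (w - w'))"
proof -
  obtain h where "holomorphic_extension r0 S h hc" using holomorphic_extension_cases[OF assms(1)] by blast
  from holomorphic_extension_lipschitz[OF this r0 assms(2-5)] show ?thesis unfolding L_def .
qed

lemma ext_of_real_Reals:
  assumes "hc \<in> {h1c, h2c, Hc}" "\<bar>x\<bar> \<le> r0" "\<bar>y\<bar> \<le> r0"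
  shows "hc (of_real x) (of_real y) \<in> \<real>"
proof -
  obtain h where "holomorphic_extension r0 S h hc" using holomorphic_extension_cases[OF assms(1)] by blast
  from holomorphic_extension_of_real[OF this assms(2,3)] show ?thesis by simp
qed

text \<open>Admissible functions are bounded by \<open>R\<close>; the radius \<open>mu_rad\<close> of the disc of parameters
  keeps the arguments \<open>\<mu> \<phi>, \<mu> \<psi>\<close> of the nonlinearity inside the bidisc of radius \<open>r0/2\<close>
  and makes the operator a contraction with factor \<open>1/2\<close>.\<close>

definition "ka = \<alpha> / \<omega>"
definition "kb = \<beta> / \<omega>"
definition "cm = max (periodic_factor ka) (periodic_factor kb)"
definition "field_bound = (1 + S) * (\<bar>\<rho>\<bar> * S + exp 1) / \<omega>"
definition "R = 2 * pi * cm * field_bound + 1"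
definition "field_lip = (L * (\<bar>\<rho>\<bar> * S + exp 1) + (1 + S) * \<bar>\<rho>\<bar> * L) / \<omega>"
definition "mu_rad = min (r0 / (2 * R)) (1 / (8 * pi * cm * field_lip + 1))"

text \<open>\<open>field h1c (-1)\<close> and \<open>field h2c 1\<close> are the nonlinear parts of the equations for \<open>\<xi>\<close> and
  \<open>\<eta>\<close> in the time \<open>\<theta>\<close>, divided by \<open>\<mu>\<close>; \<open>field_on\<close> evaluates them at \<open>\<xi> = \<mu> V1\<close>, \<open>\<eta> = \<mu> V2\<close>
  with \<open>w\<close> playing the role of \<open>\<mu>\<close>.\<close>

definition field :: "(complex \<Rightarrow> complex \<Rightarrow> complex) \<Rightarrow> real \<Rightarrow> complex \<Rightarrow> complex \<Rightarrow> complex \<Rightarrow> complex" where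
  "field hc sg z p q = of_real sg * (1 + hc p q) * (of_real \<rho> * Hc p q + sin z) / of_real \<omega>"

definition field_on :: "(complex \<Rightarrow> complex \<Rightarrow> complex) \<Rightarrow> real \<Rightarrow> (complex \<Rightarrow> complex \<Rightarrow> complex) \<Rightarrow>
    (complex \<Rightarrow> complex \<Rightarrow> complex) \<Rightarrow> complex \<Rightarrow> complex \<Rightarrow> complex" where
  "field_on hc sg V1 V2 z w = field hc sg z (w * V1 z w) (w * V2 z w)"

definition component :: "(complex \<Rightarrow> complex \<Rightarrow> complex) \<Rightarrow> real \<Rightarrow> real \<Rightarrow> bool" where
  "component hc sg k \<longleftrightarrow> (hc = h1c \<and> sg = -1 \<and> k = ka) \<or> (hc = h2c \<and> sg = 1 \<and> k = kb)"

text \<open>The variation of constants formula for the periodic solution of \<open>u' = sg k u + g\<close>.\<close>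

definition op :: "(complex \<Rightarrow> complex \<Rightarrow> complex) \<Rightarrow> real \<Rightarrow> real \<Rightarrow> (complex \<Rightarrow> complex \<Rightarrow> complex) \<Rightarrow>
    (complex \<Rightarrow> complex \<Rightarrow> complex) \<Rightarrow> complex \<Rightarrow> complex \<Rightarrow> complex" where
  "op hc sg k V1 V2 z w = - of_real (sg * periodic_factor k) * kernel_int k sg (field_on hc sg V1 V2) z w"

abbreviation "op1 \<equiv> op h1c (-1) ka"
abbreviation "op2 \<equiv> op h2c 1 kb"

definition admissible :: "(complex \<Rightarrow> complex \<Rightarrow> complex) \<Rightarrow> bool" where
  "admissible U \<longleftrightarrow> bounded_holo2 (strip 1) (ball 0 mu_rad) U \<and> (\<forall>z\<in>strip 1. \<forall>w\<in>ball 0 mu_rad. norm (U z w) \<le> R)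
     \<and> (\<forall>z w. U (z + of_real (2*pi)) w = U z w) \<and> (\<forall>x y. \<bar>y\<bar> < mu_rad \<longrightarrow> U (of_real x) (of_real y) \<in> \<real>)"

lemma ka_pos: "ka > 0" and kb_pos: "kb > 0"
  unfolding ka_def kb_def using \<alpha> \<beta> \<omega> by auto

lemma component_h1c: "component h1c (-1) ka" and component_h2c: "component h2c 1 kb"
  unfolding component_def by auto

lemma componentD:
  assumes "component hc sg k"
  shows component_ext: "hc \<in> {h1c, h2c}" and component_abs_sign: "\<bar>sg\<bar> = 1"
    and component_rate_pos: "k > 0" and component_factor_le: "periodic_factor k \<le> cm"
  using assms ka_pos kb_pos unfolding component_def cm_def by auto

lemma cm_pos: "cm > 0"
  unfolding cm_def using periodic_factor_pos[OF ka_pos] by linarith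

lemma field_bound_nonneg: "field_bound \<ge> 0"
  unfolding field_bound_def using S_nonneg \<omega> by (auto intro!: divide_nonneg_pos mult_nonneg_nonneg add_nonneg_nonneg)

lemma R_pos: "R > 0"
proof -
  have "0 \<le> 2 * pi * cm * field_bound" using cm_pos field_bound_nonneg by simp
  then show ?thesis unfolding R_def by linarith
qed

lemma field_lip_nonneg: "field_lip \<ge> 0"
  unfolding field_lip_def using S_nonneg L_nonneg \<omega> by (auto intro!: divide_nonneg_pos mult_nonneg_nonneg add_nonneg_nonneg)

lemma mu_rad: "mu_rad > 0" "mu_rad * R \<le> r0 / 2" "4 * pi * cm * field_lip * mu_rad \<le> 1/2"
proof -
  have X0: "4 * pi * cm * field_lip \<ge> 0" using cm_pos field_lip_nonneg by simp
  then have X: "8 * pi * cm * field_lip + 1 > 0" by simp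
  show "mu_rad > 0" unfolding mu_rad_def using r0 R_pos X by auto
  have "mu_rad * R \<le> r0 / (2 * R) * R" unfolding mu_rad_def using R_pos by (intro mult_right_mono) auto
  then show "mu_rad * R \<le> r0 / 2" using R_pos by simp
  have "4 * pi * cm * field_lip * mu_rad \<le> 4 * pi * cm * field_lip * (1 / (8 * pi * cm * field_lip + 1))"
    unfolding mu_rad_def using X0 by (intro mult_left_mono) auto
  also have "\<dots> \<le> 1/2" using X X0 by (simp add: field_simps)
  finally show "4 * pi * cm * field_lip * mu_rad \<le> 1/2" .
qed

lemma field_holomorphic:
  assumes hc: "hc \<in> {h1c, h2c}" and X: "open X" and A: "A holomorphic_on X" and B: "B holomorphic_on X"
    and C: "C holomorphic_on X" and AB: "\<forall>s\<in>X. norm (A s) \<le> r0 \<and> norm (B s) \<le> r0"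
  shows "(\<lambda>s. field hc sg (C s) (A s) (B s)) holomorphic_on X"
proof -
  have 1: "(\<lambda>s. hc (A s) (B s)) holomorphic_on X" using ext_holomorphic[OF _ X A B AB] hc by blast
  have 2: "(\<lambda>s. Hc (A s) (B s)) holomorphic_on X" using ext_holomorphic[OF _ X A B AB] by blast
  show ?thesis unfolding field_def using 1 2 C \<omega> by (intro holomorphic_intros) auto
qed

lemma norm_field_le:
  assumes hc: "hc \<in> {h1c, h2c}" and sg: "\<bar>sg\<bar> = 1" and z: "z \<in> strip 1"
    and p: "norm p \<le> r0" and q: "norm q \<le> r0"
  shows "norm (field hc sg z p q) \<le> field_bound"
proof -
  have 1: "norm (1 + hc p q) \<le> 1 + S" using norm_ext_le[of hc p q] hc p q norm_triangle_ineq[of 1 "hc p q"] by auto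
  have "norm (of_real \<rho> * Hc p q + sin z) \<le> \<bar>\<rho>\<bar> * norm (Hc p q) + norm (sin z)"
    by (rule order_trans[OF norm_triangle_ineq]) (simp add: norm_mult)
  also have "\<dots> \<le> \<bar>\<rho>\<bar> * S + exp 1"
    using norm_ext_le[of Hc p q] p q norm_sin_strip_1[OF z] by (intro add_mono mult_left_mono) auto
  finally have 2: "norm (of_real \<rho> * Hc p q + sin z) \<le> \<bar>\<rho>\<bar> * S + exp 1" .
  have "norm (field hc sg z p q) = norm (1 + hc p q) * norm (of_real \<rho> * Hc p q + sin z) / \<omega>"
    unfolding field_def using sg \<omega> by (simp add: norm_mult norm_divide)
  also have "\<dots> \<le> (1 + S) * (\<bar>\<rho>\<bar> * S + exp 1) / \<omega>"
    using 1 2 \<omega> S_nonneg by (intro divide_right_mono mult_mono) auto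
  finally show ?thesis unfolding field_bound_def .
qed

lemma field_lipschitz:
  assumes hc: "hc \<in> {h1c, h2c}" and sg: "\<bar>sg\<bar> = 1" and z: "z \<in> strip 1"
    and p: "norm p \<le> r0/2" and q: "norm q \<le> r0/2" and p': "norm p' \<le> r0/2" and q': "norm q' \<le> r0/2"
  shows "norm (field hc sg z p q - field hc sg z p' q') \<le> field_lip * (norm (p - p') + norm (q - q'))"
proof -
  define d where "d = norm (p - p') + norm (q - q')"
  have d0: "d \<ge> 0" unfolding d_def by simp
  have r2: "r0/2 \<le> r0" using r0 by simp
  let ?a = "hc p q" and ?a' = "hc p' q'" and ?b = "Hc p q" and ?b' = "Hc p' q'"
  have ea: "norm (?a - ?a') \<le> L * d" unfolding d_def using ext_lipschitz[of hc p q p' q'] hc p q p' q' by auto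
  have eb: "norm (?b - ?b') \<le> L * d" unfolding d_def using ext_lipschitz[of Hc p q p' q'] p q p' q' by auto
  have na': "norm (1 + ?a') \<le> 1 + S" using norm_ext_le[of hc p' q'] hc p' q' r2 norm_triangle_ineq[of 1 ?a'] by auto
  have nb: "norm (of_real \<rho> * ?b + sin z) \<le> \<bar>\<rho>\<bar> * S + exp 1"
  proof -
    have "norm (of_real \<rho> * ?b + sin z) \<le> \<bar>\<rho>\<bar> * norm ?b + norm (sin z)"
      by (rule order_trans[OF norm_triangle_ineq]) (simp add: norm_mult)
    also have "\<dots> \<le> \<bar>\<rho>\<bar> * S + exp 1"
      using norm_ext_le[of Hc p q] p q r2 norm_sin_strip_1[OF z] by (intro add_mono mult_left_mono) auto
    finally show ?thesis .
  qed
  have eq: "(1 + ?a) * (of_real \<rho> * ?b + sin z) - (1 + ?a') * (of_real \<rho> * ?b' + sin z)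
      = (?a - ?a') * (of_real \<rho> * ?b + sin z) + (1 + ?a') * (of_real \<rho> * (?b - ?b'))"
    by (simp add: algebra_simps)
  have "norm ((1 + ?a) * (of_real \<rho> * ?b + sin z) - (1 + ?a') * (of_real \<rho> * ?b' + sin z))
      \<le> norm (?a - ?a') * norm (of_real \<rho> * ?b + sin z) + norm (1 + ?a') * (\<bar>\<rho>\<bar> * norm (?b - ?b'))"
    unfolding eq by (rule order_trans[OF norm_triangle_ineq]) (simp add: norm_mult)
  also have "\<dots> \<le> (L * d) * (\<bar>\<rho>\<bar> * S + exp 1) + (1 + S) * (\<bar>\<rho>\<bar> * (L * d))"
    using ea eb na' nb S_nonneg L_nonneg d0 by (intro add_mono mult_mono mult_left_mono) auto
  also have "\<dots> = field_lip * \<omega> * d"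
  proof -
    have "\<omega> \<noteq> 0" using \<omega> by simp
    then show ?thesis unfolding field_lip_def by (simp add: field_simps)
  qed
  finally have main: "norm ((1 + ?a) * (of_real \<rho> * ?b + sin z) - (1 + ?a') * (of_real \<rho> * ?b' + sin z)) \<le> field_lip * \<omega> * d" .
  have "field hc sg z p q - field hc sg z p' q'
     = of_real sg * ((1 + ?a) * (of_real \<rho> * ?b + sin z) - (1 + ?a') * (of_real \<rho> * ?b' + sin z)) / of_real \<omega>"
    unfolding field_def mult.assoc[of "of_real sg"] by (simp only: right_diff_distrib diff_divide_distrib)
  then have "norm (field hc sg z p q - field hc sg z p' q')
      = norm ((1 + ?a) * (of_real \<rho> * ?b + sin z) - (1 + ?a') * (of_real \<rho> * ?b' + sin z)) / \<omega>"
    using sg \<omega> by (simp add: norm_mult norm_divide)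
  also have "\<dots> \<le> field_lip * \<omega> * d / \<omega>" by (rule divide_right_mono[OF main]) (use \<omega> in simp)
  also have "\<dots> = field_lip * d" using \<omega> by simp
  finally show ?thesis unfolding d_def .
qed

lemma field_real:
  assumes hc: "hc \<in> {h1c, h2c}" and "\<bar>x\<bar> \<le> r0" "\<bar>y\<bar> \<le> r0"
  shows "field hc sg (of_real t) (of_real x) (of_real y) \<in> \<real>"
proof -
  have "hc (of_real x) (of_real y) \<in> \<real>" "Hc (of_real x) (of_real y) \<in> \<real>" using ext_of_real_Reals assms by auto
  moreover have "sin (of_real t :: complex) \<in> \<real>" by (simp add: sin_of_real)
  ultimately show ?thesis unfolding field_def by (auto intro!: Reals_mult Reals_add Reals_divide)
qed
lemma norm_mult_admissible_le:
  assumes "admissible U" "z \<in> strip 1" "w \<in> ball 0 mu_rad"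
  shows "norm (w * U z w) \<le> r0/2"
proof -
  have "norm (U z w) \<le> R" using assms unfolding admissible_def by blast
  moreover have "norm w \<le> mu_rad" using assms(3) by simp
  ultimately have "norm w * norm (U z w) \<le> mu_rad * R" by (intro mult_mono) (use mu_rad in auto)
  then show ?thesis using mu_rad by (simp add: norm_mult)
qed

lemma field_on_bounded_holo2:
  assumes V1: "admissible V1" and V2: "admissible V2" and hc: "hc \<in> {h1c, h2c}" and sg: "\<bar>sg\<bar> = 1"
  shows bounded_holo2_field_on: "bounded_holo2 (strip 1) (ball 0 mu_rad) (field_on hc sg V1 V2)"
   and norm_field_on_le: "\<forall>z\<in>strip 1. \<forall>w\<in>ball 0 mu_rad. norm (field_on hc sg V1 V2 z w) \<le> field_bound"
proof -
  have r2: "r0/2 \<le> r0" using r0 by simp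
  have G1: "bounded_holo2 (strip 1) (ball 0 mu_rad) V1" and G2: "bounded_holo2 (strip 1) (ball 0 mu_rad) V2"
    using V1 V2 unfolding admissible_def by auto
  show B: "\<forall>z\<in>strip 1. \<forall>w\<in>ball 0 mu_rad. norm (field_on hc sg V1 V2 z w) \<le> field_bound"
    unfolding field_on_def using norm_field_le[OF hc sg] norm_mult_admissible_le[OF V1]
      norm_mult_admissible_le[OF V2] r2 by (meson order_trans)
  have hz: "(\<lambda>z. field_on hc sg V1 V2 z w) holomorphic_on strip 1" if w: "w \<in> ball 0 mu_rad" for w
  proof -
    have "(\<lambda>s. field hc sg s (w * V1 s w) (w * V2 s w)) holomorphic_on strip 1"
    proof (rule field_holomorphic[OF hc open_strip])
      show "(\<lambda>s. w * V1 s w) holomorphic_on strip 1" "(\<lambda>s. w * V2 s w) holomorphic_on strip 1"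
        using bounded_holo2_holomorphic1[OF G1 w] bounded_holo2_holomorphic1[OF G2 w] by (auto intro!: holomorphic_intros)
      show "(\<lambda>s. s) holomorphic_on strip 1" by (rule holomorphic_intros)
      show "\<forall>s\<in>strip 1. norm (w * V1 s w) \<le> r0 \<and> norm (w * V2 s w) \<le> r0"
        using norm_mult_admissible_le[OF V1 _ w] norm_mult_admissible_le[OF V2 _ w] r2 by (meson order_trans)
    qed
    then show ?thesis unfolding field_on_def .
  qed
  have hw: "(\<lambda>w. field_on hc sg V1 V2 z w) holomorphic_on ball 0 mu_rad" if z: "z \<in> strip 1" for z
  proof -
    have "(\<lambda>s. field hc sg z (s * V1 z s) (s * V2 z s)) holomorphic_on ball 0 mu_rad"
    proof (rule field_holomorphic[OF hc open_ball])
      show "(\<lambda>s. s * V1 z s) holomorphic_on ball 0 mu_rad" "(\<lambda>s. s * V2 z s) holomorphic_on ball 0 mu_rad"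
        using bounded_holo2_holomorphic2[OF G1 z] bounded_holo2_holomorphic2[OF G2 z] by (auto intro!: holomorphic_intros)
      show "(\<lambda>s. z) holomorphic_on ball 0 mu_rad" by (rule holomorphic_intros)
      show "\<forall>s\<in>ball 0 mu_rad. norm (s * V1 z s) \<le> r0 \<and> norm (s * V2 z s) \<le> r0"
        using norm_mult_admissible_le[OF V1 z] norm_mult_admissible_le[OF V2 z] r2 by (meson order_trans)
    qed
    then show ?thesis unfolding field_on_def .
  qed
  show "bounded_holo2 (strip 1) (ball 0 mu_rad) (field_on hc sg V1 V2)"
    unfolding bounded_holo2_def using hz hw B by blast
qed

lemma field_on_periodic:
  assumes "admissible V1" "admissible V2"
  shows "\<forall>z w. field_on hc sg V1 V2 (z + of_real (2*pi)) w = field_on hc sg V1 V2 z w"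
  using assms unfolding admissible_def field_on_def field_def by (simp add: sin_add_2pi_complex)

lemma field_on_real:
  assumes V1: "admissible V1" and V2: "admissible V2" and hc: "hc \<in> {h1c, h2c}"
  shows "\<forall>x y. \<bar>y\<bar> < mu_rad \<longrightarrow> field_on hc sg V1 V2 (of_real x) (of_real y) \<in> \<real>"
proof (intro allI impI)
  fix x y :: real assume y: "\<bar>y\<bar> < mu_rad"
  have yb: "(of_real y :: complex) \<in> ball 0 mu_rad" using y by simp
  have xs: "(of_real x :: complex) \<in> strip 1" by (simp add: of_real_in_strip)
  define p where "p = of_real y * V1 (of_real x) (of_real y)"
  define q where "q = of_real y * V2 (of_real x) (of_real y)"
  have pR: "p \<in> \<real>" "q \<in> \<real>" unfolding p_def q_def using V1 V2 y unfolding admissible_def by auto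
  have pn: "norm p \<le> r0/2" "norm q \<le> r0/2" unfolding p_def q_def using norm_mult_admissible_le[OF V1 xs yb]
    norm_mult_admissible_le[OF V2 xs yb] by auto
  have pe: "p = of_real (Re p)" "q = of_real (Re q)" using pR by (auto simp: of_real_Re)
  have "\<bar>Re p\<bar> \<le> r0" "\<bar>Re q\<bar> \<le> r0" using pn abs_Re_le_cmod[of p] abs_Re_le_cmod[of q] r0 by auto
  then have "field hc sg (of_real x) (of_real (Re p)) (of_real (Re q)) \<in> \<real>" by (rule field_real[OF hc])
  then have "field hc sg (of_real x) p q \<in> \<real>" by (simp only: pe[symmetric])
  then show "field_on hc sg V1 V2 (of_real x) (of_real y) \<in> \<real>" unfolding field_on_def p_def q_def .
qed

lemma admissible_op:
  assumes c: "component hc sg k" and V1: "admissible V1" and V2: "admissible V2"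
  shows "admissible (op hc sg k V1 V2)"
proof -
  note hc = component_ext[OF c] and sg = component_abs_sign[OF c] and k = component_rate_pos[OF c]
  note G = bounded_holo2_field_on[OF V1 V2 hc sg]
  show ?thesis unfolding admissible_def
  proof (intro conjI)
    show "bounded_holo2 (strip 1) (ball 0 mu_rad) (op hc sg k V1 V2)"
      unfolding op_def using k by (intro bounded_holo2_cmult bounded_holo2_kernel_int[OF G]) simp
    show "\<forall>z\<in>strip 1. \<forall>w\<in>ball 0 mu_rad. norm (op hc sg k V1 V2 z w) \<le> R"
    proof (intro ballI)
      fix z w :: complex assume z: "z \<in> strip 1" and w: "w \<in> ball 0 mu_rad"
      have "norm (kernel_int k sg (field_on hc sg V1 V2) z w) \<le> 2 * pi * field_bound"
        using k by (intro norm_kernel_int_le[OF G z w norm_field_on_le[OF V1 V2 hc sg]]) simp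
      then have "periodic_factor k * norm (kernel_int k sg (field_on hc sg V1 V2) z w) \<le> cm * (2 * pi * field_bound)"
        using component_factor_le[OF c] periodic_factor_pos[OF k] by (intro mult_mono) auto
      then show "norm (op hc sg k V1 V2 z w) \<le> R"
        unfolding op_def R_def using sg periodic_factor_pos[OF k] by (simp add: norm_mult abs_mult mult_ac)
    qed
    show "\<forall>z w. op hc sg k V1 V2 (z + of_real (2*pi)) w = op hc sg k V1 V2 z w"
      unfolding op_def using kernel_int_periodic[OF field_on_periodic[OF V1 V2]] by simp
    show "\<forall>x y. \<bar>y\<bar> < mu_rad \<longrightarrow> op hc sg k V1 V2 (of_real x) (of_real y) \<in> \<real>"
    proof (intro allI impI)
      fix x y :: real assume y: "\<bar>y\<bar> < mu_rad"
      have "kernel_int k sg (field_on hc sg V1 V2) (of_real x) (of_real y) \<in> \<real>"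
        by (rule kernel_int_real[OF G]) (use y field_on_real[OF V1 V2 hc] in auto)
      then show "op hc sg k V1 V2 (of_real x) (of_real y) \<in> \<real>" unfolding op_def by auto
    qed
  qed
qed

lemma field_on_lipschitz:
  assumes V1: "admissible V1" and V2: "admissible V2" and W1: "admissible W1" and W2: "admissible W2"
    and hc: "hc \<in> {h1c, h2c}" and sg: "\<bar>sg\<bar> = 1" and z: "z \<in> strip 1" and w: "w \<in> ball 0 mu_rad"
  shows "norm (field_on hc sg V1 V2 z w - field_on hc sg W1 W2 z w)
          \<le> field_lip * mu_rad * (norm (V1 z w - W1 z w) + norm (V2 z w - W2 z w))"
proof -
  have "norm (field_on hc sg V1 V2 z w - field_on hc sg W1 W2 z w)
      \<le> field_lip * (norm (w * V1 z w - w * W1 z w) + norm (w * V2 z w - w * W2 z w))"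
    unfolding field_on_def by (rule field_lipschitz[OF hc sg z norm_mult_admissible_le[OF V1 z w]
      norm_mult_admissible_le[OF V2 z w] norm_mult_admissible_le[OF W1 z w] norm_mult_admissible_le[OF W2 z w]])
  also have "\<dots> = field_lip * norm w * (norm (V1 z w - W1 z w) + norm (V2 z w - W2 z w))"
    by (simp add: norm_mult distrib_left mult.assoc flip: right_diff_distrib)
  also have "\<dots> \<le> field_lip * mu_rad * (norm (V1 z w - W1 z w) + norm (V2 z w - W2 z w))"
    using w field_lip_nonneg by (intro mult_right_mono mult_left_mono) auto
  finally show ?thesis .
qed

lemma norm_op_diff_le:
  assumes c: "component hc sg k"
    and V1: "admissible V1" and V2: "admissible V2" and W1: "admissible W1" and W2: "admissible W2"
    and E: "\<forall>z\<in>strip 1. \<forall>w\<in>ball 0 mu_rad. norm (V1 z w - W1 z w) + norm (V2 z w - W2 z w) \<le> E"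
    and z: "z \<in> strip 1" and w: "w \<in> ball 0 mu_rad"
  shows "norm (op hc sg k V1 V2 z w - op hc sg k W1 W2 z w) \<le> cm * (2 * pi * (field_lip * mu_rad * E))"
proof -
  note hc = component_ext[OF c] and sg = component_abs_sign[OF c] and k = component_rate_pos[OF c]
  note GV = bounded_holo2_field_on[OF V1 V2 hc sg] and GW = bounded_holo2_field_on[OF W1 W2 hc sg]
  have "norm (field_on hc sg V1 V2 z w - field_on hc sg W1 W2 z w) \<le> field_lip * mu_rad * E"
    if "z \<in> strip 1" "w \<in> ball 0 mu_rad" for z w
  proof -
    have "field_lip * mu_rad * (norm (V1 z w - W1 z w) + norm (V2 z w - W2 z w)) \<le> field_lip * mu_rad * E"
      using E that field_lip_nonneg mu_rad by (intro mult_left_mono) auto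
    then show ?thesis using field_on_lipschitz[OF V1 V2 W1 W2 hc sg that] by linarith
  qed
  then have "norm (kernel_int k sg (\<lambda>z w. field_on hc sg V1 V2 z w - field_on hc sg W1 W2 z w) z w)
      \<le> 2 * pi * (field_lip * mu_rad * E)"
    using k by (intro norm_kernel_int_le[OF bounded_holo2_diff[OF GV GW] z w]) auto
  then have "norm (kernel_int k sg (field_on hc sg V1 V2) z w - kernel_int k sg (field_on hc sg W1 W2) z w)
      \<le> 2 * pi * (field_lip * mu_rad * E)"
    by (simp add: kernel_int_diff[OF GV GW z w])
  then have "periodic_factor k * norm (kernel_int k sg (field_on hc sg V1 V2) z w - kernel_int k sg (field_on hc sg W1 W2) z w)
      \<le> cm * (2 * pi * (field_lip * mu_rad * E))"
    using component_factor_le[OF c] periodic_factor_pos[OF k] by (intro mult_mono) auto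
  then show ?thesis
    unfolding op_def using sg periodic_factor_pos[OF k]
    by (simp add: norm_mult abs_mult norm_minus_commute flip: right_diff_distrib)
qed

lemma op_contraction:
  assumes V1: "admissible V1" and V2: "admissible V2" and W1: "admissible W1" and W2: "admissible W2"
    and E: "\<forall>z\<in>strip 1. \<forall>w\<in>ball 0 mu_rad. norm (V1 z w - W1 z w) + norm (V2 z w - W2 z w) \<le> E"
  shows "\<forall>z\<in>strip 1. \<forall>w\<in>ball 0 mu_rad. norm (op1 V1 V2 z w - op1 W1 W2 z w) + norm (op2 V1 V2 z w - op2 W1 W2 z w) \<le> E/2"
proof (intro ballI)
  fix z w :: complex assume z: "z \<in> strip 1" and w: "w \<in> ball 0 mu_rad"
  have "E \<ge> 0"
    using E[rule_format, of 0 0] mu_rad by (simp add: strip_def) (meson add_nonneg_nonneg norm_ge_zero order_trans)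
  then have "cm * (2 * pi * (field_lip * mu_rad * E)) + cm * (2 * pi * (field_lip * mu_rad * E)) \<le> E/2"
    using mult_right_mono[OF mu_rad(3), of E] by (simp add: algebra_simps)
  then show "norm (op1 V1 V2 z w - op1 W1 W2 z w) + norm (op2 V1 V2 z w - op2 W1 W2 z w) \<le> E/2"
    using norm_op_diff_le[OF component_h1c V1 V2 W1 W2 E z w] norm_op_diff_le[OF component_h2c V1 V2 W1 W2 E z w]
    by linarith
qed

definition op_pair :: "(complex \<Rightarrow> complex \<Rightarrow> complex) \<times> (complex \<Rightarrow> complex \<Rightarrow> complex)
    \<Rightarrow> (complex \<Rightarrow> complex \<Rightarrow> complex) \<times> (complex \<Rightarrow> complex \<Rightarrow> complex)" where
  "op_pair p = (op1 (fst p) (snd p), op2 (fst p) (snd p))"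

definition "picard1 n = fst ((op_pair ^^ n) (\<lambda>z w. 0, \<lambda>z w. 0))"
definition "picard2 n = snd ((op_pair ^^ n) (\<lambda>z w. 0, \<lambda>z w. 0))"

lemma picard_Suc: "picard1 (Suc n) = op1 (picard1 n) (picard2 n)" "picard2 (Suc n) = op2 (picard1 n) (picard2 n)"
  unfolding picard1_def picard2_def by (simp_all add: op_pair_def)

lemma picard_0: "picard1 0 = (\<lambda>z w. 0)" "picard2 0 = (\<lambda>z w. 0)" unfolding picard1_def picard2_def by simp_all

lemma admissible_zero: "admissible (\<lambda>z w. 0)"
  unfolding admissible_def bounded_holo2_def using R_pos by auto

lemma admissible_picard: "admissible (picard1 n) \<and> admissible (picard2 n)"
  by (induction n)
    (auto simp: picard_0 picard_Suc admissible_zero intro: admissible_op[OF component_h1c] admissible_op[OF component_h2c])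

lemma picard_step_le: "\<forall>z\<in>strip 1. \<forall>w\<in>ball 0 mu_rad.
    norm (picard1 (Suc n) z w - picard1 n z w) + norm (picard2 (Suc n) z w - picard2 n z w) \<le> 2 * R * (1/2)^n"
proof (induction n)
  case 0
  show ?case
  proof (intro ballI)
    fix z w :: complex assume "z \<in> strip 1" "w \<in> ball 0 mu_rad"
    then have "norm (picard1 1 z w) \<le> R" "norm (picard2 1 z w) \<le> R" using admissible_picard[of 1]
      unfolding admissible_def by auto
    then show "norm (picard1 (Suc 0) z w - picard1 0 z w) + norm (picard2 (Suc 0) z w - picard2 0 z w) \<le> 2 * R * (1/2)^0"
      by (simp add: picard_0)
  qed
next
  case (Suc n)
  have "\<forall>z\<in>strip 1. \<forall>w\<in>ball 0 mu_rad. norm (op1 (picard1 (Suc n)) (picard2 (Suc n)) z w - op1 (picard1 n) (picard2 n) z w)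
      + norm (op2 (picard1 (Suc n)) (picard2 (Suc n)) z w - op2 (picard1 n) (picard2 n) z w) \<le> 2 * R * (1/2)^n / 2"
    by (rule op_contraction) (use admissible_picard Suc.IH in auto)
  then show ?case unfolding picard_Suc[of "Suc n"] picard_Suc[of n] by simp
qed

lemma picard_dist_le:
  assumes "n \<le> m"
  shows "\<forall>z\<in>strip 1. \<forall>w\<in>ball 0 mu_rad.
    norm (picard1 m z w - picard1 n z w) + norm (picard2 m z w - picard2 n z w) \<le> 4 * R * ((1/2)^n - (1/2)^m)"
  using assms
proof (induction m rule: dec_induct)
  case base
  then show ?case by simp
next
  case (step m)
  show ?case
  proof (intro ballI)
    fix z w :: complex assume zw: "z \<in> strip 1" "w \<in> ball 0 mu_rad"
    have a: "norm (picard1 m z w - picard1 n z w) + norm (picard2 m z w - picard2 n z w) \<le> 4 * R * ((1/2)^n - (1/2)^m)"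
      using step.IH zw by blast
    have b: "norm (picard1 (Suc m) z w - picard1 m z w) + norm (picard2 (Suc m) z w - picard2 m z w) \<le> 2 * R * (1/2)^m"
      using picard_step_le zw by blast
    have "norm (picard1 (Suc m) z w - picard1 n z w)
        \<le> norm (picard1 (Suc m) z w - picard1 m z w) + norm (picard1 m z w - picard1 n z w)"
      by (rule order_trans[OF _ norm_triangle_ineq]) simp
    moreover have "norm (picard2 (Suc m) z w - picard2 n z w)
        \<le> norm (picard2 (Suc m) z w - picard2 m z w) + norm (picard2 m z w - picard2 n z w)"
      by (rule order_trans[OF _ norm_triangle_ineq]) simp
    moreover have "4 * R * ((1/2)^n - (1/2)^m) + 2 * R * (1/2)^m = 4 * R * ((1/2)^n - (1/2)^Suc m)"
      by (simp add: algebra_simps)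
    ultimately show "norm (picard1 (Suc m) z w - picard1 n z w) + norm (picard2 (Suc m) z w - picard2 n z w)
        \<le> 4 * R * ((1/2)^n - (1/2)^Suc m)" using a b by linarith
  qed
qed

lemma picard_dist_le_half_pow:
  assumes "n \<le> m" "z \<in> strip 1" "w \<in> ball 0 mu_rad"
  shows "norm (picard1 m z w - picard1 n z w) + norm (picard2 m z w - picard2 n z w) \<le> 4 * R * (1/2)^n"
proof -
  have "4 * R * ((1/2)^n - (1/2)^m) \<le> 4 * R * (1/2)^n" using R_pos by (simp add: mult_left_mono)
  then show ?thesis using picard_dist_le[OF assms(1)] assms(2,3) by (meson order_trans)
qed

lemma geometric_tendsto_0: "(\<lambda>n. 4 * R * (1/2::real)^n) \<longlonglongrightarrow> 0"
  by (intro tendsto_mult_right_zero LIMSEQ_power_zero) simp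

lemma picard_convergent:
  assumes z: "z \<in> strip 1" and w: "w \<in> ball 0 mu_rad"
  shows "convergent (\<lambda>n. picard1 n z w)" "convergent (\<lambda>n. picard2 n z w)"
proof -
  have C: "Cauchy (\<lambda>n. picard1 n z w) \<and> Cauchy (\<lambda>n. picard2 n z w)"
  proof -
    have "\<exists>M. \<forall>m\<ge>M. \<forall>n\<ge>M. dist (picard1 m z w) (picard1 n z w) < e \<and> dist (picard2 m z w) (picard2 n z w) < e"
      if e: "e > 0" for e
    proof -
      obtain M where M: "\<forall>n\<ge>M. 4 * R * (1/2)^n < e"
        using order_tendstoD(2)[OF geometric_tendsto_0 e] unfolding eventually_sequentially by blast
      have "dist (picard1 m z w) (picard1 n z w) < e \<and> dist (picard2 m z w) (picard2 n z w) < e" if "m \<ge> M" "n \<ge> M" for m n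
      proof (cases "n \<le> m")
        case True
        then have "norm (picard1 m z w - picard1 n z w) + norm (picard2 m z w - picard2 n z w) \<le> 4 * R * (1/2)^n"
          using picard_dist_le_half_pow z w by blast
        then show ?thesis using M that by (smt (verit) dist_norm norm_ge_zero)
      next
        case False
        then have "norm (picard1 n z w - picard1 m z w) + norm (picard2 n z w - picard2 m z w) \<le> 4 * R * (1/2)^m"
          using picard_dist_le_half_pow z w by simp
        then show ?thesis using M that by (smt (verit) dist_norm dist_commute norm_ge_zero)
      qed
      then show ?thesis by blast
    qed
    then show ?thesis unfolding Cauchy_def by meson
  qed
  then show "convergent (\<lambda>n. picard1 n z w)" "convergent (\<lambda>n. picard2 n z w)"
    using Cauchy_convergent_iff by blast+
qed

text \<open>Outside \<open>strip 1 \<times> ball 0 mu_rad\<close> the limit need not exist and \<open>sol1\<close>, \<open>sol2\<close> are junk values,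
  which are still \<open>2\<pi>\<close>-periodic because every iterate is.\<close>

definition "sol1 z w = lim (\<lambda>n. picard1 n z w)"
definition "sol2 z w = lim (\<lambda>n. picard2 n z w)"

lemma picard_tendsto:
  assumes z: "z \<in> strip 1" and w: "w \<in> ball 0 mu_rad"
  shows "(\<lambda>n. picard1 n z w) \<longlonglongrightarrow> sol1 z w" "(\<lambda>n. picard2 n z w) \<longlonglongrightarrow> sol2 z w"
  using picard_convergent[OF z w] unfolding sol1_def sol2_def by (simp_all add: convergent_LIMSEQ_iff)

lemma sol_picard_dist_le:
  assumes z: "z \<in> strip 1" and w: "w \<in> ball 0 mu_rad"
  shows "norm (sol1 z w - picard1 n z w) + norm (sol2 z w - picard2 n z w) \<le> 4 * R * (1/2)^n"
proof -
  have L: "(\<lambda>m. norm (picard1 m z w - picard1 n z w) + norm (picard2 m z w - picard2 n z w))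
      \<longlonglongrightarrow> norm (sol1 z w - picard1 n z w) + norm (sol2 z w - picard2 n z w)"
    using picard_tendsto[OF z w] by (intro tendsto_intros)
  have "\<exists>N. \<forall>m\<ge>N. norm (picard1 m z w - picard1 n z w) + norm (picard2 m z w - picard2 n z w) \<le> 4 * R * (1/2)^n"
    using picard_dist_le_half_pow z w by blast
  then show ?thesis by (rule LIMSEQ_le_const2[OF L])
qed

lemma tendsto_of_geometric_bound:
  assumes "\<And>n. norm (F - f n) \<le> 4 * R * (1/2)^n"
  shows "f \<longlonglongrightarrow> (F::complex)"
proof -
  have "(\<lambda>n. f n - F) \<longlonglongrightarrow> 0"
    by (rule Lim_null_comparison[OF _ geometric_tendsto_0]) (use assms in \<open>auto simp: norm_minus_commute\<close>)
  then show ?thesis by (rule LIM_zero_cancel)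
qed

lemma admissible_limit:
  assumes fI: "\<And>n. admissible (f n)"
    and fb: "\<And>z w n. z \<in> strip 1 \<Longrightarrow> w \<in> ball 0 mu_rad \<Longrightarrow> norm (F z w - f n z w) \<le> 4 * R * (1/2)^n"
    and Fd: "\<And>z w. F z w = lim (\<lambda>n. f n z w)"
  shows "admissible F"
proof -
  have G: "bounded_holo2 (strip 1) (ball 0 mu_rad) (f n)" for n using fI unfolding admissible_def by blast
  have lim: "(\<lambda>n. f n z w) \<longlonglongrightarrow> F z w" if "z \<in> strip 1" "w \<in> ball 0 mu_rad" for z w
    by (rule tendsto_of_geometric_bound) (rule fb[OF that])
  have hz: "(\<lambda>z. F z w) holomorphic_on strip 1" if w: "w \<in> ball 0 mu_rad" for w
  proof (rule holomorphic_on_uniform_limit[OF open_strip])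
    show "uniform_limit (strip 1) (\<lambda>n s. f n s w) (\<lambda>s. F s w) sequentially"
      using fb[OF _ w] by (intro uniform_limitI_majorant[OF _ geometric_tendsto_0]) (simp add: dist_norm norm_minus_commute)
  qed (use bounded_holo2_holomorphic1[OF G w] in auto)
  have hw: "(\<lambda>w. F z w) holomorphic_on ball 0 mu_rad" if z: "z \<in> strip 1" for z
  proof (rule holomorphic_on_uniform_limit[OF open_ball])
    show "uniform_limit (ball 0 mu_rad) (\<lambda>n s. f n z s) (\<lambda>s. F z s) sequentially"
      using fb[OF z] by (intro uniform_limitI_majorant[OF _ geometric_tendsto_0]) (simp add: dist_norm norm_minus_commute)
  qed (use bounded_holo2_holomorphic2[OF G z] in auto)
  have bd: "\<forall>z\<in>strip 1. \<forall>w\<in>ball 0 mu_rad. norm (F z w) \<le> R"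
  proof (intro ballI)
    fix z w assume zw: "z \<in> strip 1" "w \<in> ball (0::complex) mu_rad"
    show "norm (F z w) \<le> R"
      by (rule Lim_norm_ubound[OF _ lim[OF zw]]) (use fI zw in \<open>auto simp: admissible_def\<close>)
  qed
  have per: "\<forall>z w. F (z + of_real (2*pi)) w = F z w"
    using fI unfolding Fd admissible_def by simp
  have rl: "\<forall>x y. \<bar>y\<bar> < mu_rad \<longrightarrow> F (of_real x) (of_real y) \<in> \<real>"
  proof (intro allI impI)
    fix x y :: real assume y: "\<bar>y\<bar> < mu_rad"
    have zw: "(of_real x :: complex) \<in> strip 1" "(of_real y :: complex) \<in> ball 0 mu_rad"
      using y by (auto simp: of_real_in_strip)
    have "(\<lambda>n. Im (f n (of_real x) (of_real y))) \<longlonglongrightarrow> Im (F (of_real x) (of_real y))"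
      by (rule tendsto_Im[OF lim[OF zw]])
    moreover have "Im (f n (of_real x) (of_real y)) = 0" for n
      using fI[of n] y unfolding admissible_def by (auto simp: complex_is_Real_iff)
    then have "(\<lambda>n. Im (f n (of_real x) (of_real y))) = (\<lambda>n. 0)" by simp
    ultimately have "Im (F (of_real x) (of_real y)) = 0" using LIMSEQ_unique[OF _ tendsto_const] by metis
    then show "F (of_real x) (of_real y) \<in> \<real>" by (simp add: complex_is_Real_iff)
  qed
  have "bounded_holo2 (strip 1) (ball 0 mu_rad) F" unfolding bounded_holo2_def using hz hw bd by blast
  then show ?thesis unfolding admissible_def using bd per rl by blast
qed

lemma admissible_sol: "admissible sol1" "admissible sol2"
proof -
  show "admissible sol1"
  proof (rule admissible_limit[of picard1])
    show "admissible (picard1 n)" for n using admissible_picard by blast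
    show "norm (sol1 z w - picard1 n z w) \<le> 4 * R * (1/2)^n" if "z \<in> strip 1" "w \<in> ball 0 mu_rad" for z w n
      by (rule order_trans[OF _ sol_picard_dist_le[OF that, of n]]) simp
  qed (simp add: sol1_def)
  show "admissible sol2"
  proof (rule admissible_limit[of picard2])
    show "admissible (picard2 n)" for n using admissible_picard by blast
    show "norm (sol2 z w - picard2 n z w) \<le> 4 * R * (1/2)^n" if "z \<in> strip 1" "w \<in> ball 0 mu_rad" for z w n
      by (rule order_trans[OF _ sol_picard_dist_le[OF that, of n]]) simp
  qed (simp add: sol2_def)
qed

lemma op_sol:
  assumes z: "z \<in> strip 1" and w: "w \<in> ball 0 mu_rad"
  shows "op1 sol1 sol2 z w = sol1 z w" "op2 sol1 sol2 z w = sol2 z w"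
proof -
  have c: "norm (op1 sol1 sol2 z w - picard1 (Suc n) z w) + norm (op2 sol1 sol2 z w - picard2 (Suc n) z w)
      \<le> 4 * R * (1/2)^n / 2" for n
  proof -
    have "\<forall>z\<in>strip 1. \<forall>w\<in>ball 0 mu_rad. norm (op1 sol1 sol2 z w - op1 (picard1 n) (picard2 n) z w)
        + norm (op2 sol1 sol2 z w - op2 (picard1 n) (picard2 n) z w)
        \<le> 4 * R * (1/2)^n / 2"
      by (rule op_contraction) (use admissible_sol admissible_picard sol_picard_dist_le in auto)
    then show ?thesis unfolding picard_Suc using z w by blast
  qed
  have l1: "(\<lambda>n. picard1 (Suc n) z w) \<longlonglongrightarrow> op1 sol1 sol2 z w"
  proof (rule tendsto_of_geometric_bound)
    fix n have "0 \<le> 4*R*(1/2::real)^n" using R_pos by simp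
    then show "norm (op1 sol1 sol2 z w - picard1 (Suc n) z w) \<le> 4 * R * (1/2)^n"
      using c[of n] norm_ge_zero[of "op2 sol1 sol2 z w - picard2 (Suc n) z w"] by linarith
  qed
  have l2: "(\<lambda>n. picard2 (Suc n) z w) \<longlonglongrightarrow> op2 sol1 sol2 z w"
  proof (rule tendsto_of_geometric_bound)
    fix n have "0 \<le> 4*R*(1/2::real)^n" using R_pos by simp
    then show "norm (op2 sol1 sol2 z w - picard2 (Suc n) z w) \<le> 4 * R * (1/2)^n"
      using c[of n] norm_ge_zero[of "op1 sol1 sol2 z w - picard1 (Suc n) z w"] by linarith
  qed
  show "op1 sol1 sol2 z w = sol1 z w" using LIMSEQ_unique[OF l1 LIMSEQ_Suc[OF picard_tendsto(1)[OF z w]]] .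
  show "op2 sol1 sol2 z w = sol2 z w" using LIMSEQ_unique[OF l2 LIMSEQ_Suc[OF picard_tendsto(2)[OF z w]]] .
qed

lemma op_has_pderiv1:
  assumes c: "component hc sg k" and V1: "admissible V1" and V2: "admissible V2"
    and z: "z \<in> strip 1" and w: "w \<in> ball 0 mu_rad"
  shows "((\<lambda>s. op hc sg k V1 V2 s w) has_field_derivative
           of_real (sg * k) * op hc sg k V1 V2 z w + field_on hc sg V1 V2 z w) (at z)"
proof -
  note hc = component_ext[OF c] and sg = component_abs_sign[OF c] and k = component_rate_pos[OF c]
  define P where "P = complex_of_real (periodic_factor k)"
  define e where "e = complex_of_real (exp (- k * (2*pi)))"
  define K where "K = kernel_int k sg (field_on hc sg V1 V2) z w"
  define G where "G = field_on hc sg V1 V2 z w"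
  have "sg * sg = 1" using sg by (metis abs_mult_self_eq mult_1_right)
  then have Pe: "P * (1 - e) = 1" and sg2: "of_real sg * of_real sg = (1::complex)"
    unfolding P_def e_def using periodic_factor_eq[OF k] by (metis of_real_1 of_real_diff of_real_mult)+
  have "((\<lambda>s. kernel_int k sg (field_on hc sg V1 V2) s w) has_field_derivative
      of_real sg * ((e - 1) * G + of_real k * K)) (at z)"
    unfolding e_def G_def K_def
    using sg by (intro kernel_int_has_pderiv1_periodic[OF bounded_holo2_field_on[OF V1 V2 hc sg]
        field_on_periodic[OF V1 V2] z w]) auto
  from DERIV_cmult[OF this, of "- of_real (sg * periodic_factor k)"]
  have "((\<lambda>s. op hc sg k V1 V2 s w) has_field_derivative
      - (of_real sg * P) * (of_real sg * ((e - 1) * G + of_real k * K))) (at z)"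
    unfolding op_def P_def by simp
  moreover have "op hc sg k V1 V2 z w = - (of_real sg * P) * K"
    unfolding op_def K_def P_def by simp
  then have "- (of_real sg * P) * (of_real sg * ((e - 1) * G + of_real k * K)) =
      of_real (sg * k) * op hc sg k V1 V2 z w + G"
    using Pe sg2 by simp algebra
  ultimately show ?thesis unfolding G_def by simp
qed

lemma sol_has_pderiv1:
  assumes z: "z \<in> strip 1" and w: "w \<in> ball 0 mu_rad"
  shows "((\<lambda>s. sol1 s w) has_field_derivative - of_real ka * sol1 z w + field_on h1c (-1) sol1 sol2 z w) (at z)"
    and "((\<lambda>s. sol2 s w) has_field_derivative of_real kb * sol2 z w + field_on h2c 1 sol1 sol2 z w) (at z)"
proof -
  have "((\<lambda>s. op1 sol1 sol2 s w) has_field_derivative - of_real ka * sol1 z w + field_on h1c (-1) sol1 sol2 z w) (at z)"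
    using op_has_pderiv1[OF component_h1c admissible_sol z w] op_sol(1)[OF z w] by simp
  then show "((\<lambda>s. sol1 s w) has_field_derivative - of_real ka * sol1 z w + field_on h1c (-1) sol1 sol2 z w) (at z)"
    by (rule has_field_derivative_transform_within_open[OF _ open_strip z]) (use op_sol(1) w in blast)
  have "((\<lambda>s. op2 sol1 sol2 s w) has_field_derivative of_real kb * sol2 z w + field_on h2c 1 sol1 sol2 z w) (at z)"
    using op_has_pderiv1[OF component_h2c admissible_sol z w] op_sol(2)[OF z w] by simp
  then show "((\<lambda>s. sol2 s w) has_field_derivative of_real kb * sol2 z w + field_on h2c 1 sol1 sol2 z w) (at z)"
    by (rule has_field_derivative_transform_within_open[OF _ open_strip z]) (use op_sol(2) w in blast)
qed

end

section \<open>The real periodic solution and its uniqueness\<close>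

lemma periodic_stable_integral_eq:
  fixes X F :: "real \<Rightarrow> real"
  assumes per: "\<And>s. X (s + 2*pi) = X s"
    and d: "\<And>s. (X has_real_derivative (- k * X s + F s)) (at s)"
  shows "((\<lambda>r. exp (- k * r) * F (\<theta> - r)) has_integral ((1 - exp (- k * (2*pi))) * X \<theta>)) {0..2*pi}"
proof -
  define q where "q r = exp (- k * r) * X (\<theta> - r)" for r
  have dq: "(q has_real_derivative (- (exp (- k * r) * F (\<theta> - r)))) (at r within {0..2*pi})" for r
  proof -
    have dX: "((\<lambda>r. X (\<theta> - r)) has_real_derivative (- k * X (\<theta> - r) + F (\<theta> - r)) * (-1)) (at r)"
    proof -
      have g: "((\<lambda>r. \<theta> - r) has_real_derivative -1) (at r)" by (auto intro!: derivative_eq_intros)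
      show ?thesis using DERIV_chain2[where f=X and g="\<lambda>r. \<theta> - r" and x=r and s=UNIV, OF d[of "\<theta> - r"] g] by simp
    qed
    have "(q has_real_derivative
        exp (- k * r) * ((- k * X (\<theta> - r) + F (\<theta> - r)) * (-1)) + exp (- k * r) * (- k) * X (\<theta> - r)) (at r)"
      unfolding q_def by (rule derivative_eq_intros dX | simp)+
    then show ?thesis by (simp add: algebra_simps has_field_derivative_at_within)
  qed
  have A: "((\<lambda>r. - (exp (- k * r) * F (\<theta> - r))) has_integral (q (2*pi) - q 0)) {0..2*pi}"
    using dq by (intro fundamental_theorem_of_calculus) (auto simp: has_real_derivative_iff_has_vector_derivative[symmetric])
  have B: "q (2*pi) - q 0 = - ((1 - exp (- k * (2*pi))) * X \<theta>)"
    unfolding q_def using per[of "\<theta> - 2*pi"] by (simp add: algebra_simps)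
  have "((\<lambda>r. - (- (exp (- k * r) * F (\<theta> - r)))) has_integral - (q (2*pi) - q 0)) {0..2*pi}"
    by (rule has_integral_neg[OF A])
  then show ?thesis unfolding B by simp
qed

lemma periodic_unstable_integral_eq:
  fixes Y F :: "real \<Rightarrow> real"
  assumes per: "\<And>s. Y (s + 2*pi) = Y s"
    and d: "\<And>s. (Y has_real_derivative (k * Y s + F s)) (at s)"
  shows "((\<lambda>r. exp (- k * r) * F (\<theta> + r)) has_integral ((exp (- k * (2*pi)) - 1) * Y \<theta>)) {0..2*pi}"
proof -
  define q where "q r = exp (- k * r) * Y (\<theta> + r)" for r
  have dq: "(q has_real_derivative (exp (- k * r) * F (\<theta> + r))) (at r within {0..2*pi})" for r
  proof -
    have dY: "((\<lambda>r. Y (\<theta> + r)) has_real_derivative (k * Y (\<theta> + r) + F (\<theta> + r)) * 1) (at r)"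
    proof -
      have g: "((\<lambda>r. \<theta> + r) has_real_derivative 1) (at r)" by (auto intro!: derivative_eq_intros)
      show ?thesis using DERIV_chain2[where f=Y and g="\<lambda>r. \<theta> + r" and x=r and s=UNIV, OF d[of "\<theta> + r"] g] by simp
    qed
    have "(q has_real_derivative
        exp (- k * r) * ((k * Y (\<theta> + r) + F (\<theta> + r)) * 1) + exp (- k * r) * (- k) * Y (\<theta> + r)) (at r)"
      unfolding q_def by (rule derivative_eq_intros dY | simp)+
    then show ?thesis by (simp add: algebra_simps has_field_derivative_at_within)
  qed
  have A: "((\<lambda>r. exp (- k * r) * F (\<theta> + r)) has_integral (q (2*pi) - q 0)) {0..2*pi}"
    using dq by (intro fundamental_theorem_of_calculus) (auto simp: has_real_derivative_iff_has_vector_derivative[symmetric])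
  have B: "q (2*pi) - q 0 = (exp (- k * (2*pi)) - 1) * Y \<theta>"
    unfolding q_def using per[of \<theta>] by (simp add: algebra_simps)
  show ?thesis using A unfolding B .
qed

context forced_saddle
begin

definition "phi = (\<lambda>\<theta> m. Re (sol1 (of_real \<theta>) (of_real m)))"
definition "psi = (\<lambda>\<theta> m. Re (sol2 (of_real \<theta>) (of_real m)))"
definition "rfield1 \<theta> a b = - (1 + h1 a b) * (\<rho> * H a b + sin \<theta>) / \<omega>"
definition "rfield2 \<theta> a b = (1 + h2 a b) * (\<rho> * H a b + sin \<theta>) / \<omega>"

lemma field_of_real:
  assumes "\<bar>a\<bar> \<le> r0" "\<bar>b\<bar> \<le> r0"
  shows "field h1c (-1) (of_real \<theta>) (of_real a) (of_real b) = of_real (rfield1 \<theta> a b)"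
    and "field h2c 1 (of_real \<theta>) (of_real a) (of_real b) = of_real (rfield2 \<theta> a b)"
  unfolding field_def rfield1_def rfield2_def using assms
  by (simp_all add: holomorphic_extension_of_real[OF ext1] holomorphic_extension_of_real[OF ext2]
      holomorphic_extension_of_real[OF extH] sin_of_real)

lemma rfield_lipschitz:
  assumes "\<bar>a\<bar> \<le> r0/2" "\<bar>b\<bar> \<le> r0/2" "\<bar>a'\<bar> \<le> r0/2" "\<bar>b'\<bar> \<le> r0/2"
  shows "\<bar>rfield1 \<theta> a b - rfield1 \<theta> a' b'\<bar> \<le> field_lip * (\<bar>a - a'\<bar> + \<bar>b - b'\<bar>)"
    and "\<bar>rfield2 \<theta> a b - rfield2 \<theta> a' b'\<bar> \<le> field_lip * (\<bar>a - a'\<bar> + \<bar>b - b'\<bar>)"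
proof -
  have r2: "r0/2 \<le> r0" using r0 by simp
  have hh: "h1c \<in> {h1c, h2c}" "h2c \<in> {h1c, h2c}" by auto
  have s1: "\<bar>-1::real\<bar> = 1" "\<bar>1::real\<bar> = 1" by auto
  have z: "(of_real \<theta> :: complex) \<in> strip 1" by (simp add: of_real_in_strip)
  have n: "norm (of_real a :: complex) \<le> r0/2" "norm (of_real b :: complex) \<le> r0/2"
     "norm (of_real a' :: complex) \<le> r0/2" "norm (of_real b' :: complex) \<le> r0/2" using assms by auto
  have "norm (field h1c (-1) (of_real \<theta>) (of_real a) (of_real b) - field h1c (-1) (of_real \<theta>) (of_real a') (of_real b'))
      \<le> field_lip * (norm (of_real a - of_real a' :: complex) + norm (of_real b - of_real b' :: complex))"
    by (rule field_lipschitz[OF hh(1) s1(1) z n])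
  then show "\<bar>rfield1 \<theta> a b - rfield1 \<theta> a' b'\<bar> \<le> field_lip * (\<bar>a - a'\<bar> + \<bar>b - b'\<bar>)"
    using assms r2 by (simp add: field_of_real flip: of_real_diff)
  have "norm (field h2c 1 (of_real \<theta>) (of_real a) (of_real b) - field h2c 1 (of_real \<theta>) (of_real a') (of_real b'))
      \<le> field_lip * (norm (of_real a - of_real a' :: complex) + norm (of_real b - of_real b' :: complex))"
    by (rule field_lipschitz[OF hh(2) s1(2) z n])
  then show "\<bar>rfield2 \<theta> a b - rfield2 \<theta> a' b'\<bar> \<le> field_lip * (\<bar>a - a'\<bar> + \<bar>b - b'\<bar>)"
    using assms r2 by (simp add: field_of_real flip: of_real_diff)
qed

lemma sol_of_real:
  assumes "\<bar>m\<bar> < mu_rad"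
  shows "sol1 (of_real \<theta>) (of_real m) = of_real (phi \<theta> m)" "sol2 (of_real \<theta>) (of_real m) = of_real (psi \<theta> m)"
  using admissible_sol assms unfolding admissible_def phi_def psi_def by (auto simp: of_real_Re)

lemma abs_mult_phi_le:
  assumes "\<bar>m\<bar> < mu_rad"
  shows "\<bar>m * phi \<theta> m\<bar> \<le> r0/2" "\<bar>m * psi \<theta> m\<bar> \<le> r0/2"
proof -
  have z: "(of_real \<theta> :: complex) \<in> strip 1" by (simp add: of_real_in_strip)
  have w: "(of_real m :: complex) \<in> ball 0 mu_rad" using assms by simp
  show "\<bar>m * phi \<theta> m\<bar> \<le> r0/2" using norm_mult_admissible_le[OF admissible_sol(1) z w] sol_of_real[OF assms]
    by (simp add: norm_mult abs_mult)
  show "\<bar>m * psi \<theta> m\<bar> \<le> r0/2" using norm_mult_admissible_le[OF admissible_sol(2) z w] sol_of_real[OF assms]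
    by (simp add: norm_mult abs_mult)
qed

lemma abs_phi_le:
  assumes "\<bar>m\<bar> < mu_rad"
  shows "\<bar>phi \<theta> m\<bar> \<le> R" "\<bar>psi \<theta> m\<bar> \<le> R"
proof -
  have z: "(of_real \<theta> :: complex) \<in> strip 1" by (simp add: of_real_in_strip)
  have w: "(of_real m :: complex) \<in> ball 0 mu_rad" using assms by simp
  show "\<bar>phi \<theta> m\<bar> \<le> R" using admissible_sol(1) z w unfolding admissible_def phi_def by (meson abs_Re_le_cmod order_trans)
  show "\<bar>psi \<theta> m\<bar> \<le> R" using admissible_sol(2) z w unfolding admissible_def psi_def by (meson abs_Re_le_cmod order_trans)
qed

lemma phi_periodic: "phi (\<theta> + 2*pi) m = phi \<theta> m" "psi (\<theta> + 2*pi) m = psi \<theta> m"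
  using admissible_sol unfolding admissible_def phi_def psi_def by (simp_all add: of_real_add)

lemma phi_has_derivative:
  assumes m: "\<bar>m\<bar> < mu_rad"
  shows "((\<lambda>s. phi s m) has_real_derivative (- ka * phi \<theta> m + rfield1 \<theta> (m * phi \<theta> m) (m * psi \<theta> m))) (at \<theta>)"
    and "((\<lambda>s. psi s m) has_real_derivative (kb * psi \<theta> m + rfield2 \<theta> (m * phi \<theta> m) (m * psi \<theta> m))) (at \<theta>)"
proof -
  have z: "(of_real \<theta> :: complex) \<in> strip 1" by (simp add: of_real_in_strip)
  have w: "(of_real m :: complex) \<in> ball 0 mu_rad" using m by simp
  have r2: "r0/2 \<le> r0" using r0 by simp
  have sm: "\<bar>m * phi \<theta> m\<bar> \<le> r0" "\<bar>m * psi \<theta> m\<bar> \<le> r0" using abs_mult_phi_le[OF m, of \<theta>] r2 by auto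
  have gg1: "field_on h1c (-1) sol1 sol2 (of_real \<theta>) (of_real m) = of_real (rfield1 \<theta> (m * phi \<theta> m) (m * psi \<theta> m))"
    unfolding field_on_def sol_of_real[OF m] using field_of_real(1)[OF sm] by simp
  have gg2: "field_on h2c 1 sol1 sol2 (of_real \<theta>) (of_real m) = of_real (rfield2 \<theta> (m * phi \<theta> m) (m * psi \<theta> m))"
    unfolding field_on_def sol_of_real[OF m] using field_of_real(2)[OF sm] by simp
  have "((\<lambda>x. sol1 (of_real x) (of_real m)) has_vector_derivative
      (- of_real ka * sol1 (of_real \<theta>) (of_real m) + field_on h1c (-1) sol1 sol2 (of_real \<theta>) (of_real m))) (at \<theta>)"
    by (rule has_vector_derivative_real_field[OF sol_has_pderiv1(1)[OF z w]])
  then have "((\<lambda>x. Re (sol1 (of_real x) (of_real m))) has_vector_derivative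
      Re (- of_real ka * sol1 (of_real \<theta>) (of_real m) + field_on h1c (-1) sol1 sol2 (of_real \<theta>) (of_real m))) (at \<theta>)"
    by (rule bounded_linear.has_vector_derivative[OF bounded_linear_Re])
  then show "((\<lambda>s. phi s m) has_real_derivative (- ka * phi \<theta> m + rfield1 \<theta> (m * phi \<theta> m) (m * psi \<theta> m))) (at \<theta>)"
    unfolding gg1 sol_of_real[OF m] by (simp add: has_real_derivative_iff_has_vector_derivative phi_def[symmetric])
  have "((\<lambda>x. sol2 (of_real x) (of_real m)) has_vector_derivative
      (of_real kb * sol2 (of_real \<theta>) (of_real m) + field_on h2c 1 sol1 sol2 (of_real \<theta>) (of_real m))) (at \<theta>)"
    by (rule has_vector_derivative_real_field[OF sol_has_pderiv1(2)[OF z w]])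
  then have "((\<lambda>x. Re (sol2 (of_real x) (of_real m))) has_vector_derivative
      Re (of_real kb * sol2 (of_real \<theta>) (of_real m) + field_on h2c 1 sol1 sol2 (of_real \<theta>) (of_real m))) (at \<theta>)"
    by (rule bounded_linear.has_vector_derivative[OF bounded_linear_Re])
  then show "((\<lambda>s. psi s m) has_real_derivative (kb * psi \<theta> m + rfield2 \<theta> (m * phi \<theta> m) (m * psi \<theta> m))) (at \<theta>)"
    unfolding gg2 sol_of_real[OF m] by (simp add: has_real_derivative_iff_has_vector_derivative psi_def[symmetric])
qed

definition theta_solution :: "real \<Rightarrow> (real \<Rightarrow> real) \<Rightarrow> (real \<Rightarrow> real) \<Rightarrow> bool" where
  "theta_solution m X Y \<longleftrightarrow> (\<forall>s.
     (X has_real_derivative (- ka * X s + m * rfield1 s (X s) (Y s))) (at s) \<and>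
     (Y has_real_derivative (kb * Y s + m * rfield2 s (X s) (Y s))) (at s))"

definition small_periodic_solution :: "real \<Rightarrow> (real \<Rightarrow> real) \<Rightarrow> (real \<Rightarrow> real) \<Rightarrow> bool" where
  "small_periodic_solution m X Y \<longleftrightarrow> theta_solution m X Y \<and>
     (\<forall>s. X (s + 2*pi) = X s \<and> Y (s + 2*pi) = Y s) \<and> (\<forall>s. \<bar>X s\<bar> \<le> r0/2 \<and> \<bar>Y s\<bar> \<le> r0/2)"

lemma theta_solution_phi_psi:
  assumes m: "\<bar>m\<bar> < mu_rad"
  shows "theta_solution m (\<lambda>s. m * phi s m) (\<lambda>s. m * psi s m)"
  unfolding theta_solution_def
proof
  fix s
  show "((\<lambda>s. m * phi s m) has_real_derivative (- ka * (m * phi s m) + m * rfield1 s (m * phi s m) (m * psi s m))) (at s) \<and>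
      ((\<lambda>s. m * psi s m) has_real_derivative (kb * (m * psi s m) + m * rfield2 s (m * phi s m) (m * psi s m))) (at s)"
    using DERIV_cmult[OF phi_has_derivative(1)[OF m, of s], of m] DERIV_cmult[OF phi_has_derivative(2)[OF m, of s], of m]
    by (simp add: algebra_simps)
qed

lemma small_periodic_solution_phi_psi:
  assumes m: "\<bar>m\<bar> < mu_rad"
  shows "small_periodic_solution m (\<lambda>s. m * phi s m) (\<lambda>s. m * psi s m)"
  unfolding small_periodic_solution_def using theta_solution_phi_psi[OF m] abs_mult_phi_le[OF m] phi_periodic
  by simp

lemma theta_solution_imp_is_solution:
  assumes "theta_solution \<mu> X Y"
  shows "is_solution \<alpha> \<beta> \<omega> \<rho> h1 h2 H \<mu> (\<lambda>t. X (\<omega> * t)) (\<lambda>t. Y (\<omega> * t))"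
  unfolding is_solution_def
proof (intro allI conjI)
  fix t
  have \<omega>0: "\<omega> \<noteq> 0" using \<omega> by simp
  have g: "((\<lambda>t. \<omega> * t) has_real_derivative \<omega>) (at t)" by (auto intro!: derivative_eq_intros)
  from assms have dX: "(X has_real_derivative (- ka * X (\<omega> * t) + \<mu> * rfield1 (\<omega> * t) (X (\<omega> * t)) (Y (\<omega> * t)))) (at (\<omega> * t))"
    and dY: "(Y has_real_derivative (kb * Y (\<omega> * t) + \<mu> * rfield2 (\<omega> * t) (X (\<omega> * t)) (Y (\<omega> * t)))) (at (\<omega> * t))"
    unfolding theta_solution_def by blast+
  have "(- ka * X (\<omega> * t) + \<mu> * rfield1 (\<omega> * t) (X (\<omega> * t)) (Y (\<omega> * t))) * \<omega> =
      - \<alpha> * X (\<omega> * t) - \<mu> * (1 + h1 (X (\<omega> * t)) (Y (\<omega> * t))) * (\<rho> * H (X (\<omega> * t)) (Y (\<omega> * t)) + sin (\<omega> * t))"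
    unfolding rfield1_def ka_def using \<omega>0 by (simp add: field_simps)
  with DERIV_chain2[OF dX g]
  show "((\<lambda>t. X (\<omega> * t)) has_real_derivative - \<alpha> * X (\<omega> * t) - \<mu> * (1 + h1 (X (\<omega> * t)) (Y (\<omega> * t))) *
      (\<rho> * H (X (\<omega> * t)) (Y (\<omega> * t)) + sin (\<omega> * t))) (at t)"
    by simp
  have "(kb * Y (\<omega> * t) + \<mu> * rfield2 (\<omega> * t) (X (\<omega> * t)) (Y (\<omega> * t))) * \<omega> =
      \<beta> * Y (\<omega> * t) + \<mu> * (1 + h2 (X (\<omega> * t)) (Y (\<omega> * t))) * (\<rho> * H (X (\<omega> * t)) (Y (\<omega> * t)) + sin (\<omega> * t))"
    unfolding rfield2_def kb_def using \<omega>0 by (simp add: field_simps)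
  with DERIV_chain2[OF dY g]
  show "((\<lambda>t. Y (\<omega> * t)) has_real_derivative \<beta> * Y (\<omega> * t) + \<mu> * (1 + h2 (X (\<omega> * t)) (Y (\<omega> * t))) *
      (\<rho> * H (X (\<omega> * t)) (Y (\<omega> * t)) + sin (\<omega> * t))) (at t)"
    by simp
qed

lemma is_solution_imp_theta_solution:
  assumes "is_solution \<alpha> \<beta> \<omega> \<rho> h1 h2 H \<mu> x y"
  shows "theta_solution \<mu> (\<lambda>s. x (s / \<omega>)) (\<lambda>s. y (s / \<omega>))"
  unfolding theta_solution_def
proof (intro allI conjI)
  fix s
  have \<omega>0: "\<omega> \<noteq> 0" using \<omega> by simp
  have g: "((\<lambda>s. s / \<omega>) has_real_derivative 1 / \<omega>) (at s)" using \<omega>0 by (auto intro!: derivative_eq_intros)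
  from assms have dx: "(x has_real_derivative - \<alpha> * x (s / \<omega>) - \<mu> * (1 + h1 (x (s / \<omega>)) (y (s / \<omega>))) *
      (\<rho> * H (x (s / \<omega>)) (y (s / \<omega>)) + sin (\<omega> * (s / \<omega>)))) (at (s / \<omega>))"
    and dy: "(y has_real_derivative \<beta> * y (s / \<omega>) + \<mu> * (1 + h2 (x (s / \<omega>)) (y (s / \<omega>))) *
      (\<rho> * H (x (s / \<omega>)) (y (s / \<omega>)) + sin (\<omega> * (s / \<omega>)))) (at (s / \<omega>))"
    unfolding is_solution_def by blast+
  have "(- \<alpha> * x (s / \<omega>) - \<mu> * (1 + h1 (x (s / \<omega>)) (y (s / \<omega>))) *
      (\<rho> * H (x (s / \<omega>)) (y (s / \<omega>)) + sin (\<omega> * (s / \<omega>)))) * (1 / \<omega>) =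
      - ka * x (s / \<omega>) + \<mu> * rfield1 s (x (s / \<omega>)) (y (s / \<omega>))"
    unfolding rfield1_def ka_def using \<omega>0 by (simp add: field_simps)
  with DERIV_chain2[OF dx g]
  show "((\<lambda>s. x (s / \<omega>)) has_real_derivative - ka * x (s / \<omega>) + \<mu> * rfield1 s (x (s / \<omega>)) (y (s / \<omega>))) (at s)"
    by simp
  have "(\<beta> * y (s / \<omega>) + \<mu> * (1 + h2 (x (s / \<omega>)) (y (s / \<omega>))) *
      (\<rho> * H (x (s / \<omega>)) (y (s / \<omega>)) + sin (\<omega> * (s / \<omega>)))) * (1 / \<omega>) =
      kb * y (s / \<omega>) + \<mu> * rfield2 s (x (s / \<omega>)) (y (s / \<omega>))"
    unfolding rfield2_def kb_def using \<omega>0 by (simp add: field_simps)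
  with DERIV_chain2[OF dy g]
  show "((\<lambda>s. y (s / \<omega>)) has_real_derivative kb * y (s / \<omega>) + \<mu> * rfield2 s (x (s / \<omega>)) (y (s / \<omega>))) (at s)"
    by simp
qed

end

lemma abs_diff_le_of_periodic_integrals:
  fixes F1 F2 :: "real \<Rightarrow> real"
  assumes k: "k > 0"
    and I1: "((\<lambda>r. exp (- k * r) * F1 r) has_integral ((1 - exp (- k * (2*pi))) * D1)) {0..2*pi}"
    and I2: "((\<lambda>r. exp (- k * r) * F2 r) has_integral ((1 - exp (- k * (2*pi))) * D2)) {0..2*pi}"
    and B: "\<And>r. \<bar>F1 r - F2 r\<bar> \<le> B"
  shows "\<bar>D1 - D2\<bar> \<le> periodic_factor k * (2 * pi * B)"
proof -
  have B0: "B \<ge> 0" using B[of 0] by linarith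
  have "((\<lambda>r. exp (- k * r) * F1 r - exp (- k * r) * F2 r) has_integral
      ((1 - exp (- k * (2*pi))) * D1 - (1 - exp (- k * (2*pi))) * D2)) (cbox 0 (2*pi))"
    using has_integral_diff[OF I1 I2] by (simp add: cbox_interval)
  then have "norm ((1 - exp (- k * (2*pi))) * D1 - (1 - exp (- k * (2*pi))) * D2)
      \<le> B * Henstock_Kurzweil_Integration.content (cbox 0 (2*pi))"
  proof (rule has_integral_bound[OF B0])
    fix r assume "r \<in> cbox 0 (2*pi)"
    then have "exp (- k * r) \<le> 1" using k by (simp add: cbox_interval)
    then have "exp (- k * r) * \<bar>F1 r - F2 r\<bar> \<le> 1 * B" using B[of r] by (intro mult_mono) auto
    then show "norm (exp (- k * r) * F1 r - exp (- k * r) * F2 r) \<le> B"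
      by (simp add: abs_mult flip: right_diff_distrib)
  qed
  then have "\<bar>(1 - exp (- k * (2*pi))) * (D1 - D2)\<bar> \<le> B * (2 * pi)"
    by (simp add: algebra_simps)
  then have "(1 - exp (- k * (2*pi))) * \<bar>D1 - D2\<bar> \<le> 2 * pi * B" using k by (simp add: abs_mult mult.commute)
  then have "periodic_factor k * ((1 - exp (- k * (2*pi))) * \<bar>D1 - D2\<bar>) \<le> periodic_factor k * (2 * pi * B)"
    using periodic_factor_pos[OF k] by (intro mult_left_mono) auto
  then show ?thesis using periodic_factor_eq[OF k] by (simp add: mult.assoc[symmetric])
qed

context forced_saddle
begin

lemma small_periodic_solution_dist_halves:
  assumes m: "0 \<le> m" "m \<le> mu_rad"
    and S1: "small_periodic_solution m X1 Y1" and S2: "small_periodic_solution m X2 Y2"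
    and E: "\<And>s. \<bar>X1 s - X2 s\<bar> + \<bar>Y1 s - Y2 s\<bar> \<le> E"
  shows "\<bar>X1 \<theta> - X2 \<theta>\<bar> + \<bar>Y1 \<theta> - Y2 \<theta>\<bar> \<le> E/2"
proof -
  have E0: "E \<ge> 0" using E[of 0] by linarith
  have b: "\<And>s. \<bar>X1 s\<bar> \<le> r0/2" "\<And>s. \<bar>Y1 s\<bar> \<le> r0/2" "\<And>s. \<bar>X2 s\<bar> \<le> r0/2" "\<And>s. \<bar>Y2 s\<bar> \<le> r0/2"
    using S1 S2 unfolding small_periodic_solution_def by auto
  have lip: "\<bar>m * rf s (X1 s) (Y1 s) - m * rf s (X2 s) (Y2 s)\<bar> \<le> m * field_lip * E"
    if "rf = rfield1 \<or> rf = rfield2" for rf s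
  proof -
    have "\<bar>rf s (X1 s) (Y1 s) - rf s (X2 s) (Y2 s)\<bar> \<le> field_lip * (\<bar>X1 s - X2 s\<bar> + \<bar>Y1 s - Y2 s\<bar>)"
      using that rfield_lipschitz[OF b[of s]] by blast
    also have "\<dots> \<le> field_lip * E" using E field_lip_nonneg by (intro mult_left_mono) auto
    finally show ?thesis using m by (simp add: abs_mult mult.assoc mult_left_mono flip: right_diff_distrib)
  qed
  have I1: "((\<lambda>r. exp (- ka * r) * (m * rfield1 (\<theta> - r) (X (\<theta> - r)) (Y (\<theta> - r)))) has_integral
      ((1 - exp (- ka * (2*pi))) * X \<theta>)) {0..2*pi}"
    if "small_periodic_solution m X Y" for X Y
    using that unfolding small_periodic_solution_def theta_solution_def
    by (intro periodic_stable_integral_eq) auto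
  have I2: "((\<lambda>r. exp (- kb * r) * (m * rfield2 (\<theta> + r) (X (\<theta> + r)) (Y (\<theta> + r)))) has_integral
      ((1 - exp (- kb * (2*pi))) * (- Y \<theta>))) {0..2*pi}"
    if "small_periodic_solution m X Y" for X Y
    using periodic_unstable_integral_eq[of Y kb "\<lambda>s. m * rfield2 s (X s) (Y s)" \<theta>] that
    unfolding small_periodic_solution_def theta_solution_def by (simp add: algebra_simps)
  have factor: "periodic_factor k * (2 * pi * (m * field_lip * E)) \<le> cm * (2 * pi * (mu_rad * field_lip * E))"
    if "component hc sg k" for hc sg k
  proof (rule mult_mono)
    show "2 * pi * (m * field_lip * E) \<le> 2 * pi * (mu_rad * field_lip * E)"
      using m field_lip_nonneg E0 by (simp add: mult_right_mono)
  qed (use component_rate_pos[OF that] component_factor_le[OF that] periodic_factor_pos cm_pos m field_lip_nonneg E0 in auto)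
  have "\<bar>X1 \<theta> - X2 \<theta>\<bar> \<le> periodic_factor ka * (2 * pi * (m * field_lip * E))"
    by (rule abs_diff_le_of_periodic_integrals[OF ka_pos I1[OF S1] I1[OF S2]]) (use lip in auto)
  then have X: "\<bar>X1 \<theta> - X2 \<theta>\<bar> \<le> cm * (2 * pi * (mu_rad * field_lip * E))"
    using factor[OF component_h1c] by linarith
  have "\<bar>(- Y1 \<theta>) - (- Y2 \<theta>)\<bar> \<le> periodic_factor kb * (2 * pi * (m * field_lip * E))"
    by (rule abs_diff_le_of_periodic_integrals[OF kb_pos I2[OF S1] I2[OF S2]]) (use lip in auto)
  then have Y: "\<bar>Y1 \<theta> - Y2 \<theta>\<bar> \<le> cm * (2 * pi * (mu_rad * field_lip * E))"
    using factor[OF component_h2c] by linarith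
  have "cm * (2 * pi * (mu_rad * field_lip * E)) + cm * (2 * pi * (mu_rad * field_lip * E)) \<le> E/2"
    using mult_right_mono[OF mu_rad(3) E0] by (simp add: algebra_simps)
  with X Y show ?thesis by linarith
qed

lemma small_periodic_solution_unique:
  assumes m: "0 \<le> m" "m \<le> mu_rad"
    and S1: "small_periodic_solution m X1 Y1" and S2: "small_periodic_solution m X2 Y2"
  shows "X1 \<theta> = X2 \<theta> \<and> Y1 \<theta> = Y2 \<theta>"
proof -
  have "\<bar>X1 s - X2 s\<bar> + \<bar>Y1 s - Y2 s\<bar> \<le> 2 * r0 * (1/2)^n" for n s
  proof (induction n arbitrary: s)
    case 0
    have "\<bar>X1 s\<bar> \<le> r0/2" "\<bar>X2 s\<bar> \<le> r0/2" "\<bar>Y1 s\<bar> \<le> r0/2" "\<bar>Y2 s\<bar> \<le> r0/2"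
      using S1 S2 unfolding small_periodic_solution_def by auto
    then show ?case by simp
  next
    case (Suc n)
    show ?case using small_periodic_solution_dist_halves[OF m S1 S2 Suc.IH] by simp
  qed
  moreover have "(\<lambda>n. 2 * r0 * (1/2::real)^n) \<longlonglongrightarrow> 0"
    by (intro tendsto_mult_right_zero LIMSEQ_power_zero) simp
  ultimately have "\<bar>X1 \<theta> - X2 \<theta>\<bar> + \<bar>Y1 \<theta> - Y2 \<theta>\<bar> \<le> 0"
    by (intro LIMSEQ_le_const) auto
  then show ?thesis by arith
qed

end

context forced_saddle
begin

lemma small_periodic_solution_of_is_solution:
  assumes sol: "is_solution \<alpha> \<beta> \<omega> \<rho> h1 h2 H \<mu> x y"
    and per: "\<forall>t. x (t + 2 * pi / \<omega>) = x t \<and> y (t + 2 * pi / \<omega>) = y t"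
    and small: "\<forall>t. (x t, y t) \<in> cball (0, 0) \<delta>" and \<delta>: "\<delta> \<le> r0/2"
  shows "small_periodic_solution \<mu> (\<lambda>s. x (s / \<omega>)) (\<lambda>s. y (s / \<omega>))"
  unfolding small_periodic_solution_def
proof (intro conjI allI)
  show "theta_solution \<mu> (\<lambda>s. x (s / \<omega>)) (\<lambda>s. y (s / \<omega>))"
    by (rule is_solution_imp_theta_solution[OF sol])
  fix s
  have "(s + 2*pi) / \<omega> = s / \<omega> + 2 * pi / \<omega>" by (simp add: add_divide_distrib)
  then show "x ((s + 2*pi) / \<omega>) = x (s / \<omega>)" "y ((s + 2*pi) / \<omega>) = y (s / \<omega>)" using per by auto
  have "norm (x (s / \<omega>), y (s / \<omega>)) \<le> \<delta>"
    using small by (simp only: zero_prod_def[symmetric] mem_cball_0)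
  then show "\<bar>x (s / \<omega>)\<bar> \<le> r0/2" "\<bar>y (s / \<omega>)\<bar> \<le> r0/2"
    using norm_fst_le[of "x (s / \<omega>)" "y (s / \<omega>)"] norm_snd_le[of "y (s / \<omega>)" "x (s / \<omega>)"] \<delta> by auto
qed

lemma periodic_solution_exists_unique:
  assumes \<delta>: "0 < \<delta>" "\<delta> \<le> r0/2"
  shows "\<exists>\<mu>0 > 0. \<exists>K. C3_bounded {0..\<mu>0} K phi \<and> C3_bounded {0..\<mu>0} K psi \<and>
     (\<forall>\<mu> \<in> {0..\<mu>0}.
        (\<forall>\<theta>. phi (\<theta> + 2 * pi) \<mu> = phi \<theta> \<mu> \<and> psi (\<theta> + 2 * pi) \<mu> = psi \<theta> \<mu>) \<and>
        is_solution \<alpha> \<beta> \<omega> \<rho> h1 h2 H \<mu> (\<lambda>t. \<mu> * phi (\<omega> * t) \<mu>) (\<lambda>t. \<mu> * psi (\<omega> * t) \<mu>) \<and>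
        (\<forall>t. (\<mu> * phi (\<omega> * t) \<mu>, \<mu> * psi (\<omega> * t) \<mu>) \<in> ball (0, 0) \<delta>) \<and>
        (\<forall>x y. is_solution \<alpha> \<beta> \<omega> \<rho> h1 h2 H \<mu> x y \<and>
            (\<forall>t. x (t + 2 * pi / \<omega>) = x t \<and> y (t + 2 * pi / \<omega>) = y t) \<and>
            (\<forall>t. (x t, y t) \<in> cball (0, 0) \<delta>) \<longrightarrow>
            (\<forall>t. x t = \<mu> * phi (\<omega> * t) \<mu> \<and> y t = \<mu> * psi (\<omega> * t) \<mu>)))"
proof -
  define \<mu>0 where "\<mu>0 = min (mu_rad/4) (\<delta> / (4 * R))"
  have \<mu>0: "\<mu>0 > 0" "\<mu>0 < mu_rad/2" "\<mu>0 * R \<le> \<delta>/4"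
    unfolding \<mu>0_def using mu_rad R_pos \<delta> by (auto simp: min_mult_distrib_right)
  obtain K1 K2 where "C3_bounded {0..\<mu>0} K1 phi" "C3_bounded {0..\<mu>0} K2 psi"
    using C3_bounded_Re_bounded_holo2[OF _ \<mu>0(1,2)] admissible_sol
    unfolding admissible_def phi_def psi_def by meson
  then have C3: "C3_bounded {0..\<mu>0} (max K1 K2) phi" "C3_bounded {0..\<mu>0} (max K1 K2) psi"
    by (auto intro: C3_bounded_mono)
  show ?thesis
  proof (rule exI[of _ \<mu>0], intro conjI exI[of _ "max K1 K2"] ballI allI impI)
    fix \<mu> assume \<mu>: "\<mu> \<in> {0..\<mu>0}"
    then have m: "\<bar>\<mu>\<bar> < mu_rad" "0 \<le> \<mu>" "\<mu> \<le> mu_rad" using \<mu>0 by auto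
    show "phi (\<theta> + 2 * pi) \<mu> = phi \<theta> \<mu>" "psi (\<theta> + 2 * pi) \<mu> = psi \<theta> \<mu>" for \<theta>
      using phi_periodic by simp_all
    show "is_solution \<alpha> \<beta> \<omega> \<rho> h1 h2 H \<mu> (\<lambda>t. \<mu> * phi (\<omega> * t) \<mu>) (\<lambda>t. \<mu> * psi (\<omega> * t) \<mu>)"
      using theta_solution_imp_is_solution[OF theta_solution_phi_psi[OF m(1)]] .
    show "(\<mu> * phi (\<omega> * t) \<mu>, \<mu> * psi (\<omega> * t) \<mu>) \<in> ball (0, 0) \<delta>" for t
    proof -
      have "\<bar>\<mu> * phi (\<omega> * t) \<mu>\<bar> \<le> \<mu>0 * R" "\<bar>\<mu> * psi (\<omega> * t) \<mu>\<bar> \<le> \<mu>0 * R"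
        using \<mu> abs_phi_le[OF m(1)] unfolding abs_mult by (auto intro!: mult_mono)
      then have "norm (\<mu> * phi (\<omega> * t) \<mu>, \<mu> * psi (\<omega> * t) \<mu>) < \<delta>"
        using norm_Pair_le[of "\<mu> * phi (\<omega> * t) \<mu>" "\<mu> * psi (\<omega> * t) \<mu>"] \<mu>0(3) \<delta> by simp
      then show ?thesis by (simp add: mem_ball_0 flip: zero_prod_def)
    qed
    fix x y t assume "is_solution \<alpha> \<beta> \<omega> \<rho> h1 h2 H \<mu> x y \<and>
        (\<forall>t. x (t + 2 * pi / \<omega>) = x t \<and> y (t + 2 * pi / \<omega>) = y t) \<and> (\<forall>t. (x t, y t) \<in> cball (0, 0) \<delta>)"
    then have "small_periodic_solution \<mu> (\<lambda>s. x (s / \<omega>)) (\<lambda>s. y (s / \<omega>))"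
      using small_periodic_solution_of_is_solution \<delta>(2) by blast
    from small_periodic_solution_unique[OF m(2,3) this small_periodic_solution_phi_psi[OF m(1)], of "\<omega> * t"]
    show "x t = \<mu> * phi (\<omega> * t) \<mu>" "y t = \<mu> * psi (\<omega> * t) \<mu>"
      using \<omega> by simp_all
  qed (use \<mu>0 C3 in auto)
qed

end

theorem proposition5:
  fixes \<alpha> \<beta> \<omega> \<rho> :: real
    and h1 h2 H :: "real \<Rightarrow> real \<Rightarrow> real"
    and U :: "(real \<times> real) set"
  assumes "\<alpha> > 0" "\<beta> > 0" "\<omega> > 0"
    and "open U" "(0, 0) \<in> U"
    and "real_analytic2_on h1 U" "real_analytic2_on h2 U" "real_analytic2_on H U"
    and "h1 0 0 = 0" "h2 0 0 = 0"
  shows "\<exists>\<mu>0 > 0. \<exists>K. \<exists>\<delta> > 0. \<exists>\<phi> \<psi> :: real \<Rightarrow> real \<Rightarrow> real.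
     cball (0, 0) \<delta> \<subseteq> U \<and>
     C3_bounded {0..\<mu>0} K \<phi> \<and> C3_bounded {0..\<mu>0} K \<psi> \<and>
     (\<forall>\<mu> \<in> {0..\<mu>0}.
        (\<forall>\<theta>. \<phi> (\<theta> + 2 * pi) \<mu> = \<phi> \<theta> \<mu> \<and> \<psi> (\<theta> + 2 * pi) \<mu> = \<psi> \<theta> \<mu>) \<and>
        is_solution \<alpha> \<beta> \<omega> \<rho> h1 h2 H \<mu>
          (\<lambda>t. \<mu> * \<phi> (\<omega> * t) \<mu>) (\<lambda>t. \<mu> * \<psi> (\<omega> * t) \<mu>) \<and>
        (\<forall>t. (\<mu> * \<phi> (\<omega> * t) \<mu>, \<mu> * \<psi> (\<omega> * t) \<mu>) \<in> ball (0, 0) \<delta>) \<and>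
        (\<forall>x y. is_solution \<alpha> \<beta> \<omega> \<rho> h1 h2 H \<mu> x y \<and>
            (\<forall>t. x (t + 2 * pi / \<omega>) = x t \<and> y (t + 2 * pi / \<omega>) = y t) \<and>
            (\<forall>t. (x t, y t) \<in> cball (0, 0) \<delta>) \<longrightarrow>
            (\<forall>t. x t = \<mu> * \<phi> (\<omega> * t) \<mu> \<and> y t = \<mu> * \<psi> (\<omega> * t) \<mu>)))"
proof -
  obtain r1 S1 h1c where e1: "r1 > 0" "holomorphic_extension r1 S1 h1 h1c"
    using real_analytic2_holomorphic_extension[OF assms(6,5)] by blast
  obtain r2 S2 h2c where e2: "r2 > 0" "holomorphic_extension r2 S2 h2 h2c"
    using real_analytic2_holomorphic_extension[OF assms(7,5)] by blast
  obtain r3 S3 Hc where e3: "r3 > 0" "holomorphic_extension r3 S3 H Hc"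
    using real_analytic2_holomorphic_extension[OF assms(8,5)] by blast
  define r0 where "r0 = min r1 (min r2 r3)"
  define S where "S = max S1 (max S2 S3)"
  interpret forced_saddle \<alpha> \<beta> \<omega> \<rho> h1 h2 H h1c h2c Hc r0 S
    by unfold_locales
      (use assms(1-3) e1 e2 e3 in \<open>auto simp: r0_def S_def intro: holomorphic_extension_mono\<close>)
  obtain \<epsilon> where \<epsilon>: "\<epsilon> > 0" "ball (0, 0) \<epsilon> \<subseteq> U" using assms(4,5) openE by blast
  define \<delta> where "\<delta> = min (\<epsilon>/2) (r0/2)"
  have \<delta>: "0 < \<delta>" "\<delta> \<le> r0/2" unfolding \<delta>_def using \<epsilon> r0 by auto
  have "cball (0, 0) \<delta> \<subseteq> U"
    using \<epsilon> by (intro order_trans[OF _ \<epsilon>(2)]) (auto simp: \<delta>_def cball_subset_ball_iff min_less_iff_disj)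
  then show ?thesis using periodic_solution_exists_unique[OF \<delta>] \<delta>(1) by blast
qed

end
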